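(* Let $\mathcal G$ be the complete graph on $m>1$ nodes (so $a_{ij}=1$ for all $i,j$, including self-loops) and let $\alpha\in(0,1)$. Then the function $\psi^\alpha(x)=\sum_{i=1}^m(\mu_ix_i)^\alpha$ is strictly concave on $\mathcal S_m$ and has a unique maximizer on $\mathcal S_m$, given by $$x_i^*=\frac{\mu_i^{\alpha/(1-\alpha)}}{\sum_{k=1}^m\mu_k^{\alpha/(1-\alpha)}},\quad 1\le i\le m,$$ and the iterates $x(n)$ of the choice process with this fixed $\alpha$ converge almost surely to $x^*$.
   Context: Rewards $\mu_i>0$, $\mathcal S_m$ is the unit simplex in $\mathbb R^m$. Process (with $\mathcal N(i)=\mathcal V$ for all $i$): observed rewards $\tilde\mu_i(n)=\mu_i+\zeta_i(n)$, where for each $i$, $\{\zeta_i(n)\}_{n\ge0}$ are i.i.d., zero mean, finite variance, with $\zeta(n+1)$ independent of the past. Choices $\xi(n)\in\{1,\dots,m\}$; $x(0)=(1/m,\dots,1/m)$, $x_i(n+1)=x_i(n)+\frac1{n+1}(\mathbb I\{\xi(n+1)=i\}-x_i(n))$. Empirical means $\hat\mu_i(n)=\frac{\sum_{k=0}^n\mathbb I\{\xi(k)=i\}\tilde\mu_i(k)}{\sum_{k=0}^n\mathbb I\{\xi(k)=i\}}$ (convention $0/0=0$). Exploration rates: $\varepsilon(0)\in(0,1]$, $\varepsilon(n+1)=(1-c(n))\varepsilon(n)$ with $0<c(n)\downarrow0$, $\sum_nc(n)=\infty$, $nc(n)\to0$, $\sum_n\varepsilon(n)^m=\infty$, $\sum_n\varepsilon(n)/(n+1)=\infty$,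 $\sqrt n\,\varepsilon(n)\to\infty$. Selection rule: $\mathbb P(\xi(n+1)=j\mid\mathcal F_n)=(1-\varepsilon(n))\frac{(\hat\mu_j(n)x_j(n))^\alpha}{\sum_l(\hat\mu_l(n)x_l(n))^\alpha}+\frac{\varepsilon(n)}m$, where $\mathcal F_n=\sigma(\xi(k),\zeta_i(k):k\le n,1\le i\le m)$. *)

theory Defs
  imports "HOL-Analysis.Analysis" "HOL-Probability.Probability"
begin

text \<open>Index set of arms/nodes: a finite type 'm with CARD('m) = m.\<close>

definition unit_simplex :: "(real^'m::finite) set" where
  "unit_simplex = {x. (\<forall>i. 0 \<le> x $ i) \<and> (\<Sum>i\<in>UNIV. x $ i) = 1}"

definition strict_concave_on :: "'a::real_vector set \<Rightarrow> ('a \<Rightarrow> real) \<Rightarrow> bool" where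
  "strict_concave_on S f \<longleftrightarrow> convex S \<and>
     (\<forall>x\<in>S. \<forall>y\<in>S. x \<noteq> y \<longrightarrow> (\<forall>t::real. 0 < t \<and> t < 1 \<longrightarrow>
        f ((1 - t) *\<^sub>R x + t *\<^sub>R y) > (1 - t) * f x + t * f y))"

definition psi :: "('m::finite \<Rightarrow> real) \<Rightarrow> real \<Rightarrow> real^'m \<Rightarrow> real" where
  "psi \<mu> \<alpha> x = (\<Sum>i\<in>UNIV. (\<mu> i * x $ i) powr \<alpha>)"

fun x_proc :: "(nat \<Rightarrow> 'a \<Rightarrow> 'm::finite) \<Rightarrow> nat \<Rightarrow> 'a \<Rightarrow> real^'m" where
  "x_proc \<xi> 0 \<omega> = (\<chi> i. 1 / real CARD('m))"
| "x_proc \<xi> (Suc n) \<omega> = (\<chi> i. x_proc \<xi> n \<omega> $ i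
      + (1 / real (Suc n)) * ((if \<xi> (Suc n) \<omega> = i then 1 else 0) - x_proc \<xi> n \<omega> $ i))"

text \<open>Empirical means (real division gives the convention 0/0 = 0).
  Noise is indexed as zeta i k omega.\<close>
definition mu_hat :: "('m \<Rightarrow> real) \<Rightarrow> ('m \<Rightarrow> nat \<Rightarrow> 'a \<Rightarrow> real) \<Rightarrow> (nat \<Rightarrow> 'a \<Rightarrow> 'm)
    \<Rightarrow> nat \<Rightarrow> 'a \<Rightarrow> 'm \<Rightarrow> real" where
  "mu_hat \<mu> \<zeta> \<xi> n \<omega> i =
     (\<Sum>k\<le>n. (if \<xi> k \<omega> = i then 1 else 0) * (\<mu> i + \<zeta> i k \<omega>))
     / (\<Sum>k\<le>n. (if \<xi> k \<omega> = i then 1 else 0))"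

text \<open>y^alpha for the weights; the paper's formula is only meaningful for y \<ge> 0,
  we use 0 for negative arguments.\<close>
definition wpow :: "real \<Rightarrow> real \<Rightarrow> real" where
  "wpow \<alpha> y = (if 0 < y then y powr \<alpha> else 0)"

definition sel_prob :: "real \<Rightarrow> ('m::finite \<Rightarrow> real) \<Rightarrow> ('m \<Rightarrow> nat \<Rightarrow> 'a \<Rightarrow> real)
    \<Rightarrow> (nat \<Rightarrow> 'a \<Rightarrow> 'm) \<Rightarrow> (nat \<Rightarrow> real) \<Rightarrow> nat \<Rightarrow> 'a \<Rightarrow> 'm \<Rightarrow> real" where
  "sel_prob \<alpha> \<mu> \<zeta> \<xi> \<epsilon> n \<omega> j =
     (let w = (\<lambda>l. wpow \<alpha> (mu_hat \<mu> \<zeta> \<xi> n \<omega> l * x_proc \<xi> n \<omega> $ l));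
          W = (\<Sum>l\<in>UNIV. w l)
      in (1 - \<epsilon> n) * (if W = 0 then 1 / real CARD('m) else w j / W) + \<epsilon> n / real CARD('m))"

definition past_events :: "'a measure \<Rightarrow> (nat \<Rightarrow> 'a \<Rightarrow> 'm) \<Rightarrow> ('m \<Rightarrow> nat \<Rightarrow> 'a \<Rightarrow> real)
    \<Rightarrow> nat \<Rightarrow> 'a set set" where
  "past_events M \<xi> \<zeta> n = sigma_sets (space M)
     ({\<xi> k -` A \<inter> space M | k A. k \<le> n} \<union>
      {\<zeta> i k -` B \<inter> space M | i k B. k \<le> n \<and> B \<in> sets borel})"

definition past_and_choice :: "'a measure \<Rightarrow> (nat \<Rightarrow> 'a \<Rightarrow> 'm) \<Rightarrow> ('m \<Rightarrow> nat \<Rightarrow> 'a \<Rightarrow> real)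
    \<Rightarrow> nat \<Rightarrow> 'a set set" where
  "past_and_choice M \<xi> \<zeta> n = sigma_sets (space M)
     ({\<xi> k -` A \<inter> space M | k A. k \<le> Suc n} \<union>
      {\<zeta> i k -` B \<inter> space M | i k B. k \<le> n \<and> B \<in> sets borel})"

definition noise_events :: "'a measure \<Rightarrow> ('m \<Rightarrow> nat \<Rightarrow> 'a \<Rightarrow> real) \<Rightarrow> nat \<Rightarrow> 'a set set" where
  "noise_events M \<zeta> n = sigma_sets (space M)
     {\<zeta> i n -` B \<inter> space M | i B. B \<in> sets borel}"

end

theory Submission
  imports Defs
begin

text \<open>The weighted AM-GM inequality \<open>z powr (1 - \<alpha>) * y powr \<alpha> \<le> (1 - \<alpha>) * z + \<alpha> * y\<close> gives
  both claims about \<open>psi\<close>: strict concavity termwise, and, with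
  \<open>S = (\<Sum>k. \<mu> k powr (\<alpha> / (1 - \<alpha>)))\<close> and \<open>x\<^sup>*\<close> the claimed maximiser,
  \<open>psi y = S powr (1 - \<alpha>) * (\<Sum>i. x\<^sup>*\<^sub>i powr (1 - \<alpha>) * y\<^sub>i powr \<alpha>) \<le> S powr (1 - \<alpha>) = psi x\<^sup>*\<close>,
  with equality only at \<open>y = x\<^sup>*\<close>.

  For the process, Kolmogorov's maximal inequality makes two martingale-difference series converge
  almost surely: the choice noise \<open>\<Sum>i. (1{\<xi>(i+1) = j} - P(\<xi>(i+1) = j | F\<^sub>i)) / (i + 1)\<close> and the
  reward noise weighted by inverse visit counts. The first, together with \<open>\<Sum>n. \<epsilon> n / (n + 1) = \<infinity>\<close>,
  makes every arm be chosen infinitely often; then Kronecker's lemma applied to the second gives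
  convergence of the empirical means to \<open>\<mu>\<close>. From then on, whenever \<open>x\<^sub>j \<le> b * x\<^sup>*\<^sub>j\<close> for a fixed
  \<open>b < 1\<close>, the probability of choosing \<open>j\<close> exceeds \<open>x\<^sub>j\<close> by an amount of order \<open>\<epsilon> n\<close>. Since \<open>x\<^sub>j\<close>
  minus the choice noise follows this drift, \<open>x\<^sub>j\<close> eventually stays above \<open>a * x\<^sup>*\<^sub>j\<close> for every
  \<open>a < 1\<close>, and as \<open>x\<close> and \<open>x\<^sup>*\<close> both lie in the simplex this forces \<open>x \<longrightarrow> x\<^sup>*\<close>.\<close>

section \<open>Weighted AM-GM and the maximiser of \<open>psi\<close>\<close>

lemma powr_le_tangent_at_one:
  fixes t a :: real
  assumes "0 \<le> t" "0 < a" "a < 1"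
  shows "t powr a \<le> 1 + a * (t - 1)"
proof (cases "t = 0")
  case False
  then have "t powr a * 1 powr (1 - a) \<le> a * t + (1 - a) * 1"
    using assms by (intro Youngs_inequality_0) auto
  then show ?thesis by (simp add: algebra_simps)
qed (use assms in simp)

text \<open>Strictness comes from the midpoint \<open>s\<close> of \<open>t\<close> and \<open>1\<close>: the tangent at \<open>s\<close> lies strictly
  below the tangent at \<open>1\<close> at the point \<open>t\<close>.\<close>
lemma powr_less_tangent_at_one:
  fixes t a :: real
  assumes "0 \<le> t" "0 < a" "a < 1" "t \<noteq> 1"
  shows "t powr a < 1 + a * (t - 1)"
proof -
  define s where "s = (t + 1) / 2"
  have s: "s > 0" using assms by (simp add: s_def)
  have "(t / s) powr a \<le> 1 + a * (t / s - 1)"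
    using assms s by (intro powr_le_tangent_at_one) auto
  then have "s powr a * (t / s) powr a \<le> s powr a * (1 + a * (t / s - 1))"
    by (intro mult_left_mono) auto
  moreover have "s powr a * (t / s) powr a = t powr a"
    using s assms by (simp add: powr_mult[symmetric])
  moreover have "s powr a * (1 + a * (t / s - 1)) = s powr a + a * (s powr (a - 1) * (t - s))"
    using s by (simp add: powr_diff field_simps)
  ultimately have tangent_s: "t powr a \<le> s powr a + a * (s powr (a - 1) * (t - s))" by simp
  have "s powr a \<le> 1 + a * (s - 1)"
    using s assms by (intro powr_le_tangent_at_one) auto
  moreover have "s powr (a - 1) * (t - s) < t - s"
  proof (cases "t > 1")
    case True
    then have "s > 1" by (simp add: s_def)
    then have "s powr (a - 1) < 1" using assms by (intro powr_less_one) auto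
    moreover have "t - s > 0" using True by (simp add: s_def)
    ultimately show ?thesis by simp
  next
    case False
    with assms have "t < 1" by simp
    then have "s < 1" "t - s < 0" by (simp_all add: s_def)
    moreover have "s powr (a - 1) > 1"
      using \<open>s < 1\<close> assms s by (metis diff_less_0_iff_less powr_less_mono2_neg powr_one_eq_one)
    ultimately show ?thesis by (simp add: mult_less_cancel_right)
  qed
  then have "a * (s powr (a - 1) * (t - s)) < a * (t - s)" using assms by simp
  ultimately show ?thesis using tangent_s by (simp add: algebra_simps)
qed

lemma weighted_gm_le_am:
  fixes y z a :: real
  assumes "0 < z" "0 \<le> y" "0 < a" "a < 1"
  shows "z powr (1 - a) * y powr a \<le> (1 - a) * z + a * y"
proof -
  have "z powr (1 - a) * y powr a = z * (y / z) powr a"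
    using assms by (simp add: powr_divide powr_diff field_simps)
  also have "\<dots> \<le> z * (1 + a * (y / z - 1))"
    using assms by (intro mult_left_mono powr_le_tangent_at_one) auto
  also have "\<dots> = (1 - a) * z + a * y" using assms by (simp add: field_simps)
  finally show ?thesis .
qed

lemma weighted_gm_less_am:
  fixes y z a :: real
  assumes "0 < z" "0 \<le> y" "0 < a" "a < 1" "y \<noteq> z"
  shows "z powr (1 - a) * y powr a < (1 - a) * z + a * y"
proof -
  have "z powr (1 - a) * y powr a = z * (y / z) powr a"
    using assms by (simp add: powr_divide powr_diff field_simps)
  also have "\<dots> < z * (1 + a * (y / z - 1))"
    using assms by (intro mult_strict_left_mono powr_less_tangent_at_one) auto
  also have "\<dots> = (1 - a) * z + a * y" using assms by (simp add: field_simps)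
  finally show ?thesis .
qed

lemma div_powr_le_weighted_gm:
  fixes x y b a :: real
  assumes "0 \<le> x" "x \<le> b * y" "0 < b" "0 < y" "a < 1"
  shows "x / b powr (1 - a) \<le> y powr (1 - a) * x powr a"
proof (cases "x = 0")
  case False
  then have "0 < x" using assms by simp
  have "(1 / b) powr (1 - a) \<le> (y / x) powr (1 - a)"
    using assms \<open>0 < x\<close> by (intro powr_mono2) (auto simp: field_simps)
  then have "x * (1 / b) powr (1 - a) \<le> x * (y / x) powr (1 - a)"
    using \<open>0 < x\<close> by simp
  moreover have "x * (y / x) powr (1 - a) = y powr (1 - a) * x powr a"
    using \<open>0 < x\<close> assms by (simp add: powr_divide powr_diff)
  ultimately show ?thesis using assms by (simp add: powr_divide)
qed simp

text \<open>Compare both endpoints with the convex combination \<open>w\<close> by the weighted AM-GM inequality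
  and add: the arithmetic means combine to \<open>w\<close> itself.\<close>
lemma powr_strict_concave:
  fixes u v t a :: real
  assumes "0 \<le> u" "0 \<le> v" "u \<noteq> v" "0 < t" "t < 1" "0 < a" "a < 1"
  shows "(1 - t) * u powr a + t * v powr a < ((1 - t) * u + t * v) powr a"
proof -
  define w where "w = (1 - t) * u + t * v"
  have "w - u = t * (v - u)" "w - v = (1 - t) * (u - v)"
    by (simp_all add: w_def algebra_simps)
  then have "u \<noteq> w" "v \<noteq> w"
    using assms by auto
  have "w > 0"
    using assms by (cases "u = 0") (auto simp: w_def intro: add_pos_nonneg)
  have "w powr (1 - a) * ((1 - t) * u powr a + t * v powr a)
      = (1 - t) * (w powr (1 - a) * u powr a) + t * (w powr (1 - a) * v powr a)"
    by (simp add: algebra_simps)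
  also have "\<dots> < (1 - t) * ((1 - a) * w + a * u) + t * ((1 - a) * w + a * v)"
    using assms \<open>w > 0\<close> \<open>u \<noteq> w\<close> \<open>v \<noteq> w\<close>
    by (intro add_strict_mono mult_strict_left_mono weighted_gm_less_am) auto
  also have "\<dots> = w powr (1 - a) * w powr a"
    using \<open>w > 0\<close> by (simp add: powr_add[symmetric] w_def algebra_simps)
  finally show ?thesis
    using \<open>w > 0\<close> by (simp add: w_def)
qed

lemma powr_concave:
  fixes u v t a :: real
  assumes "0 \<le> u" "0 \<le> v" "0 < t" "t < 1" "0 < a" "a < 1"
  shows "(1 - t) * u powr a + t * v powr a \<le> ((1 - t) * u + t * v) powr a"
  using powr_strict_concave[of u v t a] assms by (cases "u = v") (auto simp: algebra_simps)

lemma convex_unit_simplex: "convex (unit_simplex :: (real^'m::finite) set)"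
  unfolding convex_def unit_simplex_def
  by (auto simp: sum.distrib sum_distrib_left[symmetric])

lemma unit_simplex_nonneg: "x \<in> unit_simplex \<Longrightarrow> 0 \<le> x $ i"
  by (simp add: unit_simplex_def)

lemma unit_simplex_sum: "x \<in> unit_simplex \<Longrightarrow> (\<Sum>i\<in>UNIV. x $ i) = 1"
  by (simp add: unit_simplex_def)

lemma unit_simplex_le_one: "x \<in> unit_simplex \<Longrightarrow> x $ i \<le> 1"
  using member_le_sum[of i UNIV "\<lambda>i. x $ i"] by (simp add: unit_simplex_def)

lemma tendsto_unit_simplex_if_eventually_ge:
  fixes y :: "nat \<Rightarrow> real^'m::finite"
  assumes y: "\<And>n. y n \<in> unit_simplex" and x: "x \<in> unit_simplex"
    and ge: "\<And>a l. a < 1 \<Longrightarrow> eventually (\<lambda>n. a * x $ l \<le> y n $ l) sequentially"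
  shows "y \<longlonglongrightarrow> x"
proof (rule vec_tendstoI)
  fix j
  show "((\<lambda>n. y n $ j) \<longlongrightarrow> x $ j) sequentially"
  proof (rule LIMSEQ_I)
    fix e :: real assume "e > 0"
    define h where "h = e / 2"
    have "0 < h" "h < e" using \<open>e > 0\<close> by (simp_all add: h_def)
    have "eventually (\<lambda>n. \<forall>l. (1 - h) * x $ l \<le> y n $ l) sequentially"
      using \<open>0 < h\<close> by (intro eventually_all_finite ge) simp
    then obtain N where N: "\<And>n l. N \<le> n \<Longrightarrow> (1 - h) * x $ l \<le> y n $ l"
      by (auto simp: eventually_sequentially)
    have "\<bar>y n $ j - x $ j\<bar> < e" if "N \<le> n" for n
    proof -
      have "(1 - h) * (\<Sum>l\<in>UNIV - {j}. x $ l) \<le> (\<Sum>l\<in>UNIV - {j}. y n $ l)"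
        unfolding sum_distrib_left using N[OF that] by (intro sum_mono)
      moreover have "(\<Sum>l\<in>UNIV - {j}. y n $ l) = 1 - y n $ j" "(\<Sum>l\<in>UNIV - {j}. x $ l) = 1 - x $ j"
        using unit_simplex_sum[OF y, of n] unit_simplex_sum[OF x] by (simp_all add: sum_diff1)
      ultimately have "(1 - h) * (1 - x $ j) \<le> 1 - y n $ j" by simp
      moreover have "(1 - h) * x $ j \<le> y n $ j" by (rule N[OF that])
      moreover have "h * x $ j \<le> h" "h * (1 - x $ j) \<le> h"
        using \<open>0 < h\<close> unit_simplex_nonneg[OF x] unit_simplex_le_one[OF x]
        by (auto intro: mult_left_le)
      ultimately show ?thesis
        using \<open>h < e\<close> unfolding abs_less_iff by (simp add: algebra_simps)
    qed
    then show "\<exists>N. \<forall>n\<ge>N. norm (y n $ j - x $ j) < e" by auto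
  qed
qed

lemma psi_strict_concave:
  fixes \<mu> :: "'m::finite \<Rightarrow> real"
  assumes mu: "\<And>i. \<mu> i > 0" and a: "0 < a" "a < 1"
  shows "strict_concave_on unit_simplex (psi \<mu> a)"
  unfolding strict_concave_on_def
proof (intro conjI convex_unit_simplex ballI allI impI)
  fix x y :: "real^'m" and t :: real
  assume x: "x \<in> unit_simplex" and y: "y \<in> unit_simplex" and "x \<noteq> y" and t: "0 < t \<and> t < 1"
  obtain k where k: "x $ k \<noteq> y $ k" using \<open>x \<noteq> y\<close> by (metis vec_eq_iff)
  have split: "(1 - t) * (\<mu> i * x $ i) powr a + t * (\<mu> i * y $ i) powr a
        = \<mu> i powr a * ((1 - t) * x $ i powr a + t * y $ i powr a)" for i
    using mu[of i] unit_simplex_nonneg[OF x, of i] unit_simplex_nonneg[OF y, of i]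
    by (simp add: powr_mult algebra_simps)
  have comb: "(\<mu> i * ((1 - t) * x $ i + t * y $ i)) powr a
        = \<mu> i powr a * ((1 - t) * x $ i + t * y $ i) powr a" for i
    using mu[of i] unit_simplex_nonneg[OF x, of i] unit_simplex_nonneg[OF y, of i] t
    by (simp add: powr_mult)
  have "(1 - t) * psi \<mu> a x + t * psi \<mu> a y
      = (\<Sum>i\<in>UNIV. \<mu> i powr a * ((1 - t) * x $ i powr a + t * y $ i powr a))"
    unfolding psi_def split[symmetric] by (simp add: sum.distrib sum_distrib_left)
  also have "\<dots> < (\<Sum>i\<in>UNIV. \<mu> i powr a * ((1 - t) * x $ i + t * y $ i) powr a)"
  proof (rule sum_strict_mono_ex1)
    have "\<mu> k powr a * ((1 - t) * x $ k powr a + t * y $ k powr a)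
        < \<mu> k powr a * ((1 - t) * x $ k + t * y $ k) powr a"
      using mu[of k] k t a unit_simplex_nonneg[OF x, of k] unit_simplex_nonneg[OF y, of k]
      by (intro mult_strict_left_mono powr_strict_concave) auto
    then show "\<exists>i\<in>UNIV. \<mu> i powr a * ((1 - t) * x $ i powr a + t * y $ i powr a)
        < \<mu> i powr a * ((1 - t) * x $ i + t * y $ i) powr a"
      by blast
    show "\<forall>i\<in>UNIV. \<mu> i powr a * ((1 - t) * x $ i powr a + t * y $ i powr a)
        \<le> \<mu> i powr a * ((1 - t) * x $ i + t * y $ i) powr a"
      using t a unit_simplex_nonneg[OF x] unit_simplex_nonneg[OF y]
      by (intro ballI mult_left_mono powr_concave) auto
  qed simp
  also have "\<dots> = psi \<mu> a ((1 - t) *\<^sub>R x + t *\<^sub>R y)"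
    unfolding psi_def comb[symmetric] by simp
  finally show "(1 - t) * psi \<mu> a x + t * psi \<mu> a y < psi \<mu> a ((1 - t) *\<^sub>R x + t *\<^sub>R y)" .
qed

definition psi_maximiser_denom :: "('m::finite \<Rightarrow> real) \<Rightarrow> real \<Rightarrow> real" where
  "psi_maximiser_denom \<mu> a = (\<Sum>k\<in>UNIV. \<mu> k powr (a / (1 - a)))"

definition psi_maximiser :: "('m::finite \<Rightarrow> real) \<Rightarrow> real \<Rightarrow> real^'m" where
  "psi_maximiser \<mu> a = (\<chi> i. \<mu> i powr (a / (1 - a)) / psi_maximiser_denom \<mu> a)"

context
  fixes \<mu> :: "'m::finite \<Rightarrow> real" and a :: real
  assumes mu: "\<And>i. \<mu> i > 0" and a: "0 < a" "a < 1"
begin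

lemma psi_maximiser_denom_pos: "psi_maximiser_denom \<mu> a > 0"
  unfolding psi_maximiser_denom_def using mu by (intro sum_pos) (auto simp: less_imp_neq[OF mu, symmetric])

lemma psi_maximiser_pos: "psi_maximiser \<mu> a $ i > 0"
  unfolding psi_maximiser_def using mu[of i] psi_maximiser_denom_pos by simp

lemma psi_maximiser_in_unit_simplex: "psi_maximiser \<mu> a \<in> unit_simplex"
  unfolding unit_simplex_def
proof safe
  show "0 \<le> psi_maximiser \<mu> a $ i" for i using psi_maximiser_pos[of i] by simp
  show "(\<Sum>i\<in>UNIV. psi_maximiser \<mu> a $ i) = 1"
    unfolding psi_maximiser_def using psi_maximiser_denom_pos
    by (simp add: sum_divide_distrib[symmetric] psi_maximiser_denom_def)
qed

lemma powr_mult_eq_psi_maximiser: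
  assumes "0 \<le> y"
  shows "(\<mu> i * y) powr a
    = psi_maximiser_denom \<mu> a powr (1 - a) * (psi_maximiser \<mu> a $ i powr (1 - a) * y powr a)"
proof -
  let ?S = "psi_maximiser_denom \<mu> a"
  have "psi_maximiser \<mu> a $ i powr (1 - a) = (\<mu> i powr (a / (1 - a))) powr (1 - a) / ?S powr (1 - a)"
    unfolding psi_maximiser_def using psi_maximiser_denom_pos mu[of i] by (simp add: powr_divide)
  also have "(\<mu> i powr (a / (1 - a))) powr (1 - a) = \<mu> i powr a"
    using a by (simp add: powr_powr)
  finally have "?S powr (1 - a) * psi_maximiser \<mu> a $ i powr (1 - a) = \<mu> i powr a"
    using psi_maximiser_denom_pos by simp
  then show ?thesis using assms mu[of i] by (simp add: powr_mult mult.assoc[symmetric])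
qed

lemma psi_eq_psi_maximiser_sum:
  assumes "y \<in> unit_simplex"
  shows "psi \<mu> a y = psi_maximiser_denom \<mu> a powr (1 - a)
    * (\<Sum>i\<in>UNIV. psi_maximiser \<mu> a $ i powr (1 - a) * y $ i powr a)"
  using assms unfolding psi_def
  by (simp add: powr_mult_eq_psi_maximiser unit_simplex_nonneg sum_distrib_left)

lemma psi_maximiser_gm_sum_le_one:
  assumes "y \<in> unit_simplex"
  shows "(\<Sum>i\<in>UNIV. psi_maximiser \<mu> a $ i powr (1 - a) * y $ i powr a) \<le> 1"
proof -
  have "(\<Sum>i\<in>UNIV. psi_maximiser \<mu> a $ i powr (1 - a) * y $ i powr a)
      \<le> (\<Sum>i\<in>UNIV. (1 - a) * psi_maximiser \<mu> a $ i + a * y $ i)"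
    using assms a by (intro sum_mono weighted_gm_le_am psi_maximiser_pos unit_simplex_nonneg)
  also have "\<dots> = 1"
    using assms psi_maximiser_in_unit_simplex
    by (simp add: unit_simplex_sum sum.distrib sum_distrib_left[symmetric])
  finally show ?thesis .
qed

lemma psi_less_psi_maximiser:
  assumes "y \<in> unit_simplex" "y \<noteq> psi_maximiser \<mu> a"
  shows "psi \<mu> a y < psi \<mu> a (psi_maximiser \<mu> a)"
proof -
  let ?x = "psi_maximiser \<mu> a"
  obtain k where k: "y $ k \<noteq> ?x $ k" using assms(2) by (metis vec_eq_iff)
  have "(\<Sum>i\<in>UNIV. ?x $ i powr (1 - a) * y $ i powr a) < (\<Sum>i\<in>UNIV. (1 - a) * ?x $ i + a * y $ i)"
    using assms(1) a k
    by (intro sum_strict_mono_ex1)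
       (auto intro!: weighted_gm_le_am weighted_gm_less_am psi_maximiser_pos unit_simplex_nonneg)
  also have "\<dots> = 1"
    using assms psi_maximiser_in_unit_simplex
    by (simp add: unit_simplex_sum sum.distrib sum_distrib_left[symmetric])
  also have "1 = (\<Sum>i\<in>UNIV. ?x $ i powr (1 - a) * ?x $ i powr a)"
    using psi_maximiser_pos psi_maximiser_in_unit_simplex
    by (simp add: powr_add[symmetric] unit_simplex_sum abs_of_pos)
  finally show ?thesis
    using assms(1) psi_maximiser_in_unit_simplex psi_maximiser_denom_pos
    by (simp add: psi_eq_psi_maximiser_sum)
qed

end

section \<open>Square-integrable martingale differences\<close>

lemma integrable_mult_of_square_integrable:
  fixes f g :: "'a \<Rightarrow> real"
  assumes [measurable]: "f \<in> borel_measurable M" "g \<in> borel_measurable M"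
    and "integrable M (\<lambda>x. (f x)\<^sup>2)" "integrable M (\<lambda>x. (g x)\<^sup>2)"
  shows "integrable M (\<lambda>x. f x * g x)"
proof (rule Bochner_Integration.integrable_bound)
  show "integrable M (\<lambda>x. (f x)\<^sup>2 + (g x)\<^sup>2)" using assms by simp
  have "\<bar>f x * g x\<bar> \<le> (f x)\<^sup>2 + (g x)\<^sup>2" for x
  proof -
    have "0 \<le> (\<bar>f x\<bar> - \<bar>g x\<bar>)\<^sup>2" by simp
    then have "2 * (\<bar>f x\<bar> * \<bar>g x\<bar>) \<le> (f x)\<^sup>2 + (g x)\<^sup>2"
      by (simp add: power2_eq_square algebra_simps)
    moreover have "0 \<le> \<bar>f x\<bar> * \<bar>g x\<bar>" by simp
    ultimately have "\<bar>f x\<bar> * \<bar>g x\<bar> \<le> (f x)\<^sup>2 + (g x)\<^sup>2" by linarith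
    then show ?thesis by (simp add: abs_mult)
  qed
  then show "AE x in M. norm (f x * g x) \<le> norm ((f x)\<^sup>2 + (g x)\<^sup>2)" by simp
qed simp

lemma square_integrable_add:
  fixes f g :: "'a \<Rightarrow> real"
  assumes [measurable]: "f \<in> borel_measurable M" "g \<in> borel_measurable M"
    and "integrable M (\<lambda>x. (f x)\<^sup>2)" "integrable M (\<lambda>x. (g x)\<^sup>2)"
  shows "integrable M (\<lambda>x. (f x + g x)\<^sup>2)"
proof -
  have "integrable M (\<lambda>x. (f x)\<^sup>2 + (g x)\<^sup>2 + 2 * (f x * g x))"
    using assms integrable_mult_of_square_integrable[OF assms] by simp
  then show ?thesis by (simp add: power2_sum mult.assoc)
qed

lemma square_integrable_sum:
  fixes f :: "'i \<Rightarrow> 'a \<Rightarrow> real"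
  assumes "finite I" "\<And>i. i \<in> I \<Longrightarrow> f i \<in> borel_measurable M"
    and "\<And>i. i \<in> I \<Longrightarrow> integrable M (\<lambda>x. (f i x)\<^sup>2)"
  shows "integrable M (\<lambda>x. (\<Sum>i\<in>I. f i x)\<^sup>2)"
  using assms
proof (induction I rule: finite_induct)
  case (insert j I)
  then show ?case by (simp add: square_integrable_add)
qed simp

lemma convergent_partial_sums_if_blocks_small:
  fixes f :: "nat \<Rightarrow> real"
  assumes small: "\<And>e. e > 0 \<Longrightarrow> \<exists>n. \<forall>k. \<bar>\<Sum>i\<in>{n..<n+k}. f i\<bar> < e"
  shows "convergent (\<lambda>n. \<Sum>i<n. f i)"
proof -
  have "summable f"
    unfolding summable_Cauchy
  proof (intro allI impI)
    fix e :: real assume "e > 0"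
    then obtain n where n: "\<And>k. \<bar>\<Sum>i\<in>{n..<n+k}. f i\<bar> < e / 2"
      using small[of "e / 2"] by auto
    have "norm (sum f {m..<p}) < e" if "n \<le> m" for m p
    proof (cases "m \<le> p")
      case True
      then have "sum f {n..<n + (p - n)} = sum f {n..<n + (m - n)} + sum f {m..<p}"
        using \<open>n \<le> m\<close> by (simp add: sum.atLeastLessThan_concat)
      then show ?thesis
        using n[of "p - n"] n[of "m - n"] unfolding real_norm_def abs_less_iff by linarith
    qed (use \<open>e > 0\<close> in simp)
    then show "\<exists>N. \<forall>m\<ge>N. \<forall>p. norm (sum f {m..<p}) < e" by blast
  qed
  then show ?thesis by (simp add: summable_iff_convergent)
qed

text \<open>An \<open>L\<^sup>2\<close>-martingale difference sequence, with the martingale property stated as orthogonality to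
  square-integrable \<open>F i\<close>-measurable functions rather than via conditional expectations.\<close>
locale L2_martingale_differences = prob_space M for M :: "'a measure" +
  fixes F :: "nat \<Rightarrow> 'a measure" and d :: "nat \<Rightarrow> 'a \<Rightarrow> real"
  assumes subalgebra_F: "\<And>i. subalgebra M (F i)"
    and F_mono: "\<And>i j. i \<le> j \<Longrightarrow> sets (F i) \<subseteq> sets (F j)"
    and d_adapted: "\<And>i j. j < i \<Longrightarrow> d j \<in> borel_measurable (F i)"
    and d_square_integrable: "\<And>i. integrable M (\<lambda>\<omega>. (d i \<omega>)\<^sup>2)"
    and d_orthogonal: "\<And>i g. g \<in> borel_measurable (F i) \<Longrightarrow> integrable M (\<lambda>\<omega>. (g \<omega>)\<^sup>2)
                 \<Longrightarrow> (\<integral>\<omega>. g \<omega> * d i \<omega> \<partial>M) = 0"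
begin

lemma space_F: "space (F i) = space M"
  using subalgebra_F[of i] by (simp add: subalgebra_def)

lemma measurable_F_mono: "f \<in> borel_measurable (F i) \<Longrightarrow> i \<le> j \<Longrightarrow> f \<in> borel_measurable (F j)"
  by (rule measurable_from_subalg[of "F j" "F i"]) (auto simp: subalgebra_def space_F F_mono)

lemma measurable_F_imp_M: "f \<in> borel_measurable (F i) \<Longrightarrow> f \<in> borel_measurable M"
  by (rule measurable_from_subalg[OF subalgebra_F])

lemma d_measurable [measurable]: "d i \<in> borel_measurable M"
  using measurable_F_imp_M[OF d_adapted[of i "Suc i"]] by simp

definition block_sum :: "nat \<Rightarrow> nat \<Rightarrow> 'a \<Rightarrow> real" where
  "block_sum n k \<omega> = (\<Sum>i\<in>{n..<n+k}. d i \<omega>)"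

lemma block_sum_adapted: "l \<le> k \<Longrightarrow> block_sum n l \<in> borel_measurable (F (n + k))"
  unfolding block_sum_def by (intro borel_measurable_sum d_adapted) auto

lemma block_sum_measurable [measurable]: "block_sum n l \<in> borel_measurable M"
  using measurable_F_imp_M[OF block_sum_adapted[of l l n]] by simp

lemma block_sum_square_integrable: "integrable M (\<lambda>\<omega>. (block_sum n k \<omega>)\<^sup>2)"
  unfolding block_sum_def by (rule square_integrable_sum) (auto intro: d_square_integrable)

lemma block_sum_add: "k \<le> L \<Longrightarrow> block_sum n L \<omega> = block_sum n k \<omega> + (\<Sum>i\<in>{n+k..<n+L}. d i \<omega>)"
  unfolding block_sum_def by (simp add: sum.atLeastLessThan_concat)

lemma integral_block_sum_square:
  "(\<integral>\<omega>. (block_sum n k \<omega>)\<^sup>2 \<partial>M) = (\<Sum>i\<in>{n..<n+k}. \<integral>\<omega>. (d i \<omega>)\<^sup>2 \<partial>M)"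
proof (induction k)
  case (Suc k)
  have "integrable M (\<lambda>\<omega>. block_sum n k \<omega> * d (n + k) \<omega>)"
    by (intro integrable_mult_of_square_integrable block_sum_square_integrable d_square_integrable)
       measurable
  moreover have "(\<integral>\<omega>. block_sum n k \<omega> * d (n + k) \<omega> \<partial>M) = 0"
    by (rule d_orthogonal[OF block_sum_adapted[of k k n] block_sum_square_integrable]) simp
  moreover have "(block_sum n (Suc k) \<omega>)\<^sup>2
      = (block_sum n k \<omega>)\<^sup>2 + 2 * (block_sum n k \<omega> * d (n + k) \<omega>) + (d (n + k) \<omega>)\<^sup>2" for \<omega>
    unfolding block_sum_def by (simp add: power2_sum)
  ultimately show ?case
    using Suc block_sum_square_integrable d_square_integrable by simp
qed (simp add: block_sum_def)

definition first_exceedance :: "nat \<Rightarrow> real \<Rightarrow> nat \<Rightarrow> 'a set" where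
  "first_exceedance n c k =
     {\<omega>\<in>space M. c \<le> \<bar>block_sum n k \<omega>\<bar> \<and> (\<forall>l<k. \<bar>block_sum n l \<omega>\<bar> < c)}"

lemma first_exceedance_adapted: "first_exceedance n c k \<in> sets (F (n + k))"
proof -
  have [measurable]: "block_sum n l \<in> borel_measurable (F (n + k))" if "l \<le> k" for l
    using block_sum_adapted that by simp
  have "first_exceedance n c k
      = {\<omega>\<in>space (F (n + k)). c \<le> \<bar>block_sum n k \<omega>\<bar> \<and> (\<forall>l\<in>{..<k}. \<bar>block_sum n l \<omega>\<bar> < c)}"
    unfolding first_exceedance_def space_F by auto
  also have "\<dots> \<in> sets (F (n + k))"
    by (intro sets.sets_Collect_conj sets.sets_Collect_finite_All) auto
  finally show ?thesis .
qed

lemma first_exceedance_sets [measurable]: "first_exceedance n c k \<in> sets M"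
  using first_exceedance_adapted[of n c k] subalgebra_F[of "n + k"] by (auto simp: subalgebra_def)

lemma exists_first_exceedance:
  assumes "\<omega> \<in> space M" "k0 \<le> L" "c \<le> \<bar>block_sum n k0 \<omega>\<bar>"
  shows "\<exists>k\<le>L. \<omega> \<in> first_exceedance n c k"
proof -
  define k where "k = (LEAST k. c \<le> \<bar>block_sum n k \<omega>\<bar>)"
  have "c \<le> \<bar>block_sum n k \<omega>\<bar>"
    unfolding k_def by (rule LeastI[of _ k0]) (rule assms(3))
  moreover have "k \<le> L"
    unfolding k_def using assms by (meson Least_le order_trans)
  moreover have "\<bar>block_sum n l \<omega>\<bar> < c" if "l < k" for l
    using not_less_Least[of l "\<lambda>k. c \<le> \<bar>block_sum n k \<omega>\<bar>"] that unfolding k_def by simp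
  ultimately show ?thesis
    using assms(1) unfolding first_exceedance_def by auto
qed

lemma first_exceedance_unique:
  assumes "\<omega> \<in> first_exceedance n c k" "\<omega> \<in> first_exceedance n c l"
  shows "k = l"
proof (rule ccontr)
  assume "k \<noteq> l"
  then have "k < l \<or> l < k" by arith
  then show False using assms unfolding first_exceedance_def by (auto simp: not_le)
qed

lemma sum_indicator_first_exceedance_le_1:
  "(\<Sum>k\<le>L. indicator (first_exceedance n c k) \<omega>) \<le> (1::real)"
proof (cases "\<exists>k\<le>L. \<omega> \<in> first_exceedance n c k")
  case True
  then obtain k where "k \<le> L" "\<omega> \<in> first_exceedance n c k" by auto
  then have "(\<Sum>l\<le>L. indicator (first_exceedance n c l) \<omega>)
      = (\<Sum>l\<in>{k}. indicator (first_exceedance n c l) \<omega> :: real)"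
    by (intro sum.mono_neutral_right) (auto simp: indicator_def dest: first_exceedance_unique)
  then show ?thesis by simp
qed (simp add: indicator_def)

lemma integrable_indicator_times_block_sum_square:
  "integrable M (\<lambda>\<omega>. indicator A \<omega> * (block_sum n m \<omega>)\<^sup>2)" if "A \<in> sets M"
proof (rule Bochner_Integration.integrable_bound[OF block_sum_square_integrable[of n m]])
  show "AE \<omega> in M. norm (indicator A \<omega> * (block_sum n m \<omega>)\<^sup>2) \<le> norm ((block_sum n m \<omega>)\<^sup>2)"
    by (simp add: indicator_def)
qed (use that in measurable)

text \<open>On the \<open>F (n + k)\<close>-event of first exceedance at \<open>k\<close>, the later increments are orthogonal to
  \<open>block_sum n k\<close>, so the second moment can only grow.\<close>
lemma integral_first_exceedance_mono:
  assumes "k \<le> L"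
  shows "(\<integral>\<omega>. indicator (first_exceedance n c k) \<omega> * (block_sum n k \<omega>)\<^sup>2 \<partial>M)
       \<le> (\<integral>\<omega>. indicator (first_exceedance n c k) \<omega> * (block_sum n L \<omega>)\<^sup>2 \<partial>M)"
proof -
  let ?A = "first_exceedance n c k"
  define g where "g \<omega> = indicator ?A \<omega> * block_sum n k \<omega>" for \<omega>
  define R where "R \<omega> = (\<Sum>i\<in>{n+k..<n+L}. d i \<omega>)" for \<omega>
  have g_adapted: "g \<in> borel_measurable (F (n + k))"
    unfolding g_def using first_exceedance_adapted block_sum_adapted[of k k n]
    by (intro borel_measurable_times) auto
  then have [measurable]: "g \<in> borel_measurable M" by (rule measurable_F_imp_M)
  have "(\<lambda>\<omega>. (g \<omega>)\<^sup>2) = (\<lambda>\<omega>. indicator ?A \<omega> * (block_sum n k \<omega>)\<^sup>2)"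
    by (auto simp: g_def indicator_def)
  then have g_square_integrable: "integrable M (\<lambda>\<omega>. (g \<omega>)\<^sup>2)"
    using integrable_indicator_times_block_sum_square[of ?A n k] by simp
  have gd: "integrable M (\<lambda>\<omega>. g \<omega> * d i \<omega>)" for i
    by (intro integrable_mult_of_square_integrable g_square_integrable d_square_integrable)
       measurable
  have "(\<integral>\<omega>. g \<omega> * R \<omega> \<partial>M) = (\<Sum>i\<in>{n+k..<n+L}. \<integral>\<omega>. g \<omega> * d i \<omega> \<partial>M)"
    unfolding R_def sum_distrib_left by (rule Bochner_Integration.integral_sum) (use gd in auto)
  also have "\<dots> = 0"
    using measurable_F_mono[OF g_adapted] g_square_integrable
    by (intro sum.neutral ballI d_orthogonal) auto
  finally have gR: "(\<integral>\<omega>. g \<omega> * R \<omega> \<partial>M) = 0" .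
  have pointwise: "indicator ?A \<omega> * (block_sum n k \<omega>)\<^sup>2 + 2 * (g \<omega> * R \<omega>)
      \<le> indicator ?A \<omega> * (block_sum n L \<omega>)\<^sup>2" for \<omega>
    using block_sum_add[OF assms, of n \<omega>]
    by (simp add: g_def R_def indicator_def power2_sum)
  have "integrable M (\<lambda>\<omega>. g \<omega> * R \<omega>)"
    unfolding R_def by (simp add: sum_distrib_left gd)
  then have "(\<integral>\<omega>. indicator ?A \<omega> * (block_sum n k \<omega>)\<^sup>2 \<partial>M)
      = (\<integral>\<omega>. indicator ?A \<omega> * (block_sum n k \<omega>)\<^sup>2 + 2 * (g \<omega> * R \<omega>) \<partial>M)"
    using gR integrable_indicator_times_block_sum_square[of ?A] by simp
  also have "\<dots> \<le> (\<integral>\<omega>. indicator ?A \<omega> * (block_sum n L \<omega>)\<^sup>2 \<partial>M)"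
    using pointwise \<open>integrable M (\<lambda>\<omega>. g \<omega> * R \<omega>)\<close> integrable_indicator_times_block_sum_square[of ?A]
    by (intro integral_mono) auto
  finally show ?thesis .
qed

lemma kolmogorov_maximal_inequality:
  assumes "c > 0"
  shows "measure M {\<omega>\<in>space M. \<exists>k\<le>L. c \<le> \<bar>block_sum n k \<omega>\<bar>}
         \<le> (\<Sum>i\<in>{n..<n+L}. \<integral>\<omega>. (d i \<omega>)\<^sup>2 \<partial>M) / c\<^sup>2"
proof -
  define B where "B = {\<omega>\<in>space M. \<exists>k\<le>L. c \<le> \<bar>block_sum n k \<omega>\<bar>}"
  let ?A = "first_exceedance n c"
  have B_sets [measurable]: "B \<in> sets M" unfolding B_def by measurable
  have B_covered: "c\<^sup>2 * indicator B \<omega> \<le> (\<Sum>k\<le>L. indicator (?A k) \<omega> * (block_sum n k \<omega>)\<^sup>2)" for \<omega>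
  proof (cases "\<omega> \<in> B")
    case True
    then have "\<omega> \<in> space M" "\<exists>k0\<le>L. c \<le> \<bar>block_sum n k0 \<omega>\<bar>" by (auto simp: B_def)
    then obtain k where "k \<le> L" "\<omega> \<in> ?A k" using exists_first_exceedance by blast
    then have "c\<^sup>2 \<le> indicator (?A k) \<omega> * (block_sum n k \<omega>)\<^sup>2"
      using assms by (simp add: first_exceedance_def abs_le_square_iff[symmetric])
    also have "\<dots> \<le> (\<Sum>k\<le>L. indicator (?A k) \<omega> * (block_sum n k \<omega>)\<^sup>2)"
      using \<open>k \<le> L\<close> by (intro member_le_sum) auto
    finally show ?thesis using True by simp
  qed (simp add: sum_nonneg)
  have int_A: "integrable M (\<lambda>\<omega>. indicator (?A k) \<omega> * (block_sum n m \<omega>)\<^sup>2)" for k m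
    by (rule integrable_indicator_times_block_sum_square) simp
  have "c\<^sup>2 * measure M B = (\<integral>\<omega>. c\<^sup>2 * indicator B \<omega> \<partial>M)"
    by simp
  also have "\<dots> \<le> (\<integral>\<omega>. (\<Sum>k\<le>L. indicator (?A k) \<omega> * (block_sum n k \<omega>)\<^sup>2) \<partial>M)"
  proof (rule integral_mono)
    show "integrable M (\<lambda>\<omega>. c\<^sup>2 * indicator B \<omega>)"
      by (intro integrable_mult_right integrable_real_indicator) (auto simp: less_top[symmetric])
    show "integrable M (\<lambda>\<omega>. \<Sum>k\<le>L. indicator (?A k) \<omega> * (block_sum n k \<omega>)\<^sup>2)"
      by (intro Bochner_Integration.integrable_sum int_A)
  qed (rule B_covered)
  also have "\<dots> = (\<Sum>k\<le>L. \<integral>\<omega>. indicator (?A k) \<omega> * (block_sum n k \<omega>)\<^sup>2 \<partial>M)"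
    using int_A by (intro Bochner_Integration.integral_sum) auto
  also have "\<dots> \<le> (\<Sum>k\<le>L. \<integral>\<omega>. indicator (?A k) \<omega> * (block_sum n L \<omega>)\<^sup>2 \<partial>M)"
    by (intro sum_mono integral_first_exceedance_mono) auto
  also have "\<dots> = (\<integral>\<omega>. (\<Sum>k\<le>L. indicator (?A k) \<omega>) * (block_sum n L \<omega>)\<^sup>2 \<partial>M)"
    by (subst Bochner_Integration.integral_sum[symmetric]) (use int_A in \<open>auto simp: sum_distrib_right\<close>)
  also have "\<dots> \<le> (\<integral>\<omega>. (block_sum n L \<omega>)\<^sup>2 \<partial>M)"
  proof (rule integral_mono)
    show "integrable M (\<lambda>\<omega>. (\<Sum>k\<le>L. indicator (?A k) \<omega>) * (block_sum n L \<omega>)\<^sup>2)"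
      unfolding sum_distrib_right by (intro Bochner_Integration.integrable_sum int_A)
    show "(\<Sum>k\<le>L. indicator (?A k) \<omega>) * (block_sum n L \<omega>)\<^sup>2 \<le> (block_sum n L \<omega>)\<^sup>2" for \<omega>
      using sum_indicator_first_exceedance_le_1[where L=L and n=n and c=c and \<omega>=\<omega>]
      by (intro mult_left_le_one_le) (auto intro: sum_nonneg)
  qed (rule block_sum_square_integrable)
  also have "\<dots> = (\<Sum>i\<in>{n..<n+L}. \<integral>\<omega>. (d i \<omega>)\<^sup>2 \<partial>M)"
    by (rule integral_block_sum_square)
  finally show ?thesis
    using assms by (simp add: B_def pos_le_divide_eq mult.commute)
qed

lemma measure_block_sum_exceeds:
  assumes summable: "summable (\<lambda>i. \<integral>\<omega>. (d i \<omega>)\<^sup>2 \<partial>M)" and "c > 0"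
  shows "measure M {\<omega>\<in>space M. \<exists>k. c \<le> \<bar>block_sum n k \<omega>\<bar>}
         \<le> (\<Sum>i. \<integral>\<omega>. (d (i + n) \<omega>)\<^sup>2 \<partial>M) / c\<^sup>2"
proof -
  define B where "B L = {\<omega>\<in>space M. \<exists>k\<le>L. c \<le> \<bar>block_sum n k \<omega>\<bar>}" for L
  have [measurable]: "B L \<in> sets M" for L unfolding B_def by measurable
  have "(\<lambda>L. measure M (B L)) \<longlonglongrightarrow> measure M (\<Union>L. B L)"
    by (rule finite_Lim_measure_incseq) (auto simp: incseq_def B_def intro: order_trans)
  moreover have "(\<Union>L. B L) = {\<omega>\<in>space M. \<exists>k. c \<le> \<bar>block_sum n k \<omega>\<bar>}"
    unfolding B_def by auto
  ultimately have lim: "(\<lambda>L. measure M (B L)) \<longlonglongrightarrow> measure M {\<omega>\<in>space M. \<exists>k. c \<le> \<bar>block_sum n k \<omega>\<bar>}"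
    by simp
  have bound: "measure M (B L) \<le> (\<Sum>i. \<integral>\<omega>. (d (i + n) \<omega>)\<^sup>2 \<partial>M) / c\<^sup>2" for L
  proof -
    have "measure M (B L) \<le> (\<Sum>i\<in>{n..<n+L}. \<integral>\<omega>. (d i \<omega>)\<^sup>2 \<partial>M) / c\<^sup>2"
      unfolding B_def by (rule kolmogorov_maximal_inequality[OF \<open>c > 0\<close>])
    also have "(\<Sum>i\<in>{n..<n+L}. \<integral>\<omega>. (d i \<omega>)\<^sup>2 \<partial>M) = (\<Sum>i<L. \<integral>\<omega>. (d (i + n) \<omega>)\<^sup>2 \<partial>M)"
      by (rule sum.reindex_bij_witness[of _ "\<lambda>i. i + n" "\<lambda>i. i - n"]) auto
    also have "\<dots> \<le> (\<Sum>i. \<integral>\<omega>. (d (i + n) \<omega>)\<^sup>2 \<partial>M)"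
      using summable_ignore_initial_segment[OF summable] by (intro sum_le_suminf) auto
    finally show ?thesis by (simp add: divide_right_mono)
  qed
  show ?thesis
    by (rule LIMSEQ_le_const2[OF lim]) (use bound in auto)
qed

theorem AE_convergent_partial_sums:
  assumes summable: "summable (\<lambda>i. \<integral>\<omega>. (d i \<omega>)\<^sup>2 \<partial>M)"
  shows "AE \<omega> in M. convergent (\<lambda>n. \<Sum>i<n. d i \<omega>)"
proof -
  define N where "N r = (\<Inter>n. {\<omega>\<in>space M. \<exists>k. 1 / Suc r \<le> \<bar>block_sum n k \<omega>\<bar>})" for r
  have tail_lim: "(\<lambda>n. (\<Sum>i. \<integral>\<omega>. (d (i + n) \<omega>)\<^sup>2 \<partial>M)) \<longlonglongrightarrow> 0"
    using summable by (rule suminf_exist_split2)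
  have "N r \<in> null_sets M" for r
  proof -
    have N_sets: "N r \<in> sets M" unfolding N_def by measurable
    have "measure M (N r) \<le> (\<Sum>i. \<integral>\<omega>. (d (i + n) \<omega>)\<^sup>2 \<partial>M) / (1 / Suc r)\<^sup>2" for n
    proof -
      have "measure M (N r) \<le> measure M {\<omega>\<in>space M. \<exists>k. 1 / Suc r \<le> \<bar>block_sum n k \<omega>\<bar>}"
        by (rule finite_measure_mono) (auto simp: N_def)
      then show ?thesis
        using measure_block_sum_exceeds[OF summable, of "1 / Suc r" n] by simp
    qed
    moreover have "(\<lambda>n. (\<Sum>i. \<integral>\<omega>. (d (i + n) \<omega>)\<^sup>2 \<partial>M) / (1 / Suc r)\<^sup>2) \<longlonglongrightarrow> 0 / (1 / Suc r)\<^sup>2"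
      by (intro tendsto_divide tail_lim tendsto_const) auto
    ultimately have "measure M (N r) \<le> 0"
      by (intro LIMSEQ_le_const[where X = "\<lambda>n. (\<Sum>i. \<integral>\<omega>. (d (i + n) \<omega>)\<^sup>2 \<partial>M) / (1 / Suc r)\<^sup>2"]) auto
    then show ?thesis
      using N_sets by (simp add: null_sets_def emeasure_eq_measure measure_le_0_iff)
  qed
  then have "(\<Union>r. N r) \<in> null_sets M" by auto
  then show ?thesis
  proof (rule AE_I')
    show "{\<omega>\<in>space M. \<not> convergent (\<lambda>n. \<Sum>i<n. d i \<omega>)} \<subseteq> (\<Union>r. N r)"
    proof (safe, rule ccontr)
      fix \<omega> assume "\<omega> \<in> space M" "\<not> convergent (\<lambda>n. \<Sum>i<n. d i \<omega>)" "\<omega> \<notin> (\<Union>r. N r)"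
      then have small: "\<exists>n. \<forall>k. \<bar>block_sum n k \<omega>\<bar> < 1 / Suc r" for r
        by (auto simp: N_def not_le)
      have "convergent (\<lambda>n. \<Sum>i<n. d i \<omega>)"
      proof (rule convergent_partial_sums_if_blocks_small)
        fix e :: real assume "e > 0"
        then obtain r where r: "1 / Suc r < e" using reals_Archimedean by (auto simp: inverse_eq_divide)
        obtain n where "\<And>k. \<bar>block_sum n k \<omega>\<bar> < 1 / Suc r" using small[of r] by blast
        then have "\<bar>block_sum n k \<omega>\<bar> < e" for k using r less_trans by blast
        then show "\<exists>n. \<forall>k. \<bar>\<Sum>i\<in>{n..<n+k}. d i \<omega>\<bar> < e"
          unfolding block_sum_def by blast
      qed
      with \<open>\<not> convergent _\<close> show False ..
    qed
  qed
qed

end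

section \<open>Series lemmas\<close>

lemma filterlim_partial_sums_at_top:
  fixes f :: "nat \<Rightarrow> real"
  assumes not_summable: "\<not> summable f" and nonneg: "\<And>n. N \<le> n \<Longrightarrow> 0 \<le> f n"
  shows "filterlim (\<lambda>n. \<Sum>i<n. f i) at_top sequentially"
  unfolding filterlim_at_top eventually_sequentially
proof
  fix Z
  show "\<exists>n0. \<forall>n\<ge>n0. Z \<le> (\<Sum>i<n. f i)"
  proof (rule ccontr)
    assume not_eventually: "\<not> ?thesis"
    have "(\<Sum>i<k. f (i + N)) \<le> Z - (\<Sum>i<N. f i)" for k
    proof -
      obtain m where "k + N \<le> m" "(\<Sum>i<m. f i) < Z"
        using not_eventually by (auto simp: not_le)
      moreover have "(\<Sum>i<k + N. f i) \<le> (\<Sum>i<m. f i)"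
        using \<open>k + N \<le> m\<close> nonneg by (intro sum_mono2) auto
      moreover have "(\<Sum>i<k + N. f i) = (\<Sum>i<N. f i) + (\<Sum>i<k. f (i + N))"
        by (induction k) (simp_all add: add.commute)
      ultimately show ?thesis by linarith
    qed
    then have "summable (\<lambda>i. f (i + N))"
      using nonneg by (intro summableI_nonneg_bounded) auto
    with not_summable show False by (simp add: summable_iff_shift)
  qed
qed

text \<open>Once \<open>c n < 1\<close>, \<open>\<bar>\<epsilon> (k + N)\<bar> \<le> \<bar>\<epsilon> N\<bar> exp (- (\<Sum>i<k. c (i + N)))\<close>, and the exponent diverges.\<close>
lemma product_recursion_tendsto_zero:
  fixes \<epsilon> c :: "nat \<Rightarrow> real"
  assumes rec: "\<And>n. \<epsilon> (Suc n) = (1 - c n) * \<epsilon> n"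
    and c_nonneg: "\<And>n. 0 \<le> c n" and c_lim: "c \<longlonglongrightarrow> 0" and c_nsum: "\<not> summable c"
  shows "\<epsilon> \<longlonglongrightarrow> 0"
proof -
  obtain N where N: "\<And>n. N \<le> n \<Longrightarrow> c n < 1"
    using order_tendstoD(2)[OF c_lim, of 1] by (auto simp: eventually_sequentially)
  define S where "S k = (\<Sum>i<k. c (i + N))" for k
  have bound: "\<bar>\<epsilon> (k + N)\<bar> \<le> \<bar>\<epsilon> N\<bar> * exp (- S k)" for k
  proof (induction k)
    case (Suc k)
    have "\<bar>\<epsilon> (Suc k + N)\<bar> = (1 - c (k + N)) * \<bar>\<epsilon> (k + N)\<bar>"
      using rec[of "k + N"] N[of "k + N"] by (simp add: abs_mult)
    also have "\<dots> \<le> exp (- c (k + N)) * (\<bar>\<epsilon> N\<bar> * exp (- S k))"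
      using Suc N[of "k + N"] exp_ge_add_one_self[of "- c (k + N)"]
      by (intro mult_mono) auto
    also have "\<dots> = \<bar>\<epsilon> N\<bar> * exp (- S (Suc k))"
      by (simp add: S_def exp_add[symmetric] algebra_simps)
    finally show ?case .
  qed (simp add: S_def)
  have "filterlim S at_top sequentially"
    unfolding S_def using c_nsum c_nonneg
    by (intro filterlim_partial_sums_at_top[where N = 0]) (auto simp: summable_iff_shift)
  then have "filterlim (\<lambda>k. - S k) at_bot sequentially"
    by (simp add: filterlim_uminus_at_top)
  then have "((\<lambda>k. exp (- S k)) \<longlongrightarrow> 0) sequentially"
    by (rule filterlim_compose[OF exp_at_bot])
  then have "(\<lambda>k. \<bar>\<epsilon> N\<bar> * exp (- S k)) \<longlonglongrightarrow> 0"
    by (rule tendsto_mult_right_zero)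
  moreover have "eventually (\<lambda>k. norm (\<epsilon> (k + N)) \<le> \<bar>\<epsilon> N\<bar> * exp (- S k)) sequentially"
    using bound by simp
  ultimately have "(\<lambda>k. \<epsilon> (k + N)) \<longlonglongrightarrow> 0"
    by (rule Lim_null_comparison[rotated])
  then show ?thesis by (rule LIMSEQ_offset)
qed

lemma sum_by_parts_from:
  fixes a b R :: "nat \<Rightarrow> real"
  assumes "\<And>i. a i = b i * (R (Suc i) - R i)" and "R K = 0" and "K \<le> n"
  shows "(\<Sum>i\<in>{K..<n}. a i) = b n * R n - (\<Sum>i\<in>{K..<n}. (b (Suc i) - b i) * R (Suc i))"
  using \<open>K \<le> n\<close>
proof (induction n rule: dec_induct)
  case (step n)
  then show ?case using assms(1)[of n] by (simp add: algebra_simps)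
qed (simp add: assms(2))

lemma abs_sum_increments_mult_le:
  fixes b R :: "nat \<Rightarrow> real"
  assumes "mono b" "\<And>i. K \<le> i \<Longrightarrow> \<bar>R i\<bar> \<le> \<rho>" "K \<le> n"
  shows "\<bar>\<Sum>i\<in>{K..<n}. (b (Suc i) - b i) * R (Suc i)\<bar> \<le> (b n - b K) * \<rho>"
proof -
  have "\<bar>(b (Suc i) - b i) * R (Suc i)\<bar> \<le> (b (Suc i) - b i) * \<rho>" if "K \<le> i" for i
  proof -
    have "0 \<le> b (Suc i) - b i" using \<open>mono b\<close> by (simp add: mono_def)
    then have "\<bar>(b (Suc i) - b i) * R (Suc i)\<bar> = (b (Suc i) - b i) * \<bar>R (Suc i)\<bar>"
      by (simp add: abs_mult)
    also have "\<dots> \<le> (b (Suc i) - b i) * \<rho>"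
      using assms(2)[of "Suc i"] that \<open>0 \<le> b (Suc i) - b i\<close> by (intro mult_left_mono) auto
    finally show ?thesis .
  qed
  then have "\<bar>\<Sum>i\<in>{K..<n}. (b (Suc i) - b i) * R (Suc i)\<bar> \<le> (\<Sum>i\<in>{K..<n}. (b (Suc i) - b i) * \<rho>)"
    by (intro order_trans[OF sum_abs sum_mono]) auto
  also have "\<dots> = (\<Sum>i\<in>{K..<n}. b (Suc i) - b i) * \<rho>"
    by (rule sum_distrib_right[symmetric])
  also have "\<dots> = (b n - b K) * \<rho>"
    using assms(3) by (simp only: sum_Suc_diff')
  finally show ?thesis .
qed

lemma kronecker_lemma:
  fixes a b :: "nat \<Rightarrow> real"
  assumes mono: "mono b" and pos: "\<And>n. b n > 0" and lim: "filterlim b at_top sequentially"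
    and conv: "convergent (\<lambda>n. \<Sum>i<n. a i / b i)"
  shows "(\<lambda>n. (\<Sum>i<n. a i) / b n) \<longlonglongrightarrow> 0"
proof (rule LIMSEQ_I)
  fix r :: real assume "r > 0"
  define T where "T n = (\<Sum>i<n. a i / b i)" for n
  have "Cauchy T" using conv Cauchy_convergent_iff unfolding T_def by blast
  then obtain K where K: "\<And>m n. m \<ge> K \<Longrightarrow> n \<ge> K \<Longrightarrow> \<bar>T m - T n\<bar> < r / 4"
    using \<open>r > 0\<close> unfolding Cauchy_def dist_real_def by (metis divide_pos_pos zero_less_numeral)
  define R where "R n = T n - T K" for n
  define C where "C = \<bar>\<Sum>i<K. a i\<bar>"
  have R_small: "\<bar>R n\<bar> \<le> r / 4" if "n \<ge> K" for n unfolding R_def using K[OF that, of K] by simp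
  have main: "2 * \<bar>\<Sum>i<n. a i\<bar> \<le> 2 * C + b n * r" if "n \<ge> K" for n
  proof -
    have "(\<Sum>i\<in>{K..<n}. a i) = b n * R n - (\<Sum>i\<in>{K..<n}. (b (Suc i) - b i) * R (Suc i))"
      using that pos[THEN less_imp_neq] by (intro sum_by_parts_from) (auto simp: R_def T_def)
    moreover have "\<bar>b n * R n\<bar> \<le> b n * (r / 4)"
      using R_small[OF that] pos[of n] by (simp add: abs_mult mult_left_mono)
    moreover have "\<bar>\<Sum>i\<in>{K..<n}. (b (Suc i) - b i) * R (Suc i)\<bar> \<le> (b n - b K) * (r / 4)"
      using mono R_small that by (rule abs_sum_increments_mult_le)
    moreover have "(b n - b K) * (r / 4) \<le> b n * (r / 4)"
      using pos[of K] \<open>r > 0\<close> by (simp add: mult_right_mono)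
    moreover have "(\<Sum>i<n. a i) = (\<Sum>i<K. a i) + (\<Sum>i\<in>{K..<n}. a i)"
      using that by (metis atLeast0LessThan le0 sum.atLeastLessThan_concat)
    ultimately show ?thesis unfolding C_def by linarith
  qed
  obtain N where N: "\<And>n. n \<ge> N \<Longrightarrow> b n > 2 * (C + 1) / r"
    using lim by (auto simp: filterlim_at_top_dense eventually_sequentially)
  have "\<bar>(\<Sum>i<n. a i) / b n\<bar> < r" if "n \<ge> max K N" for n
  proof -
    have "2 * (C + 1) < b n * r" using N[of n] that \<open>r > 0\<close> by (simp add: pos_divide_less_eq)
    then have "\<bar>\<Sum>i<n. a i\<bar> < b n * r" using main[of n] that by simp
    then show ?thesis using pos[of n] by (simp add: abs_divide pos_divide_less_eq mult.commute)
  qed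
  then show "\<exists>no. \<forall>n\<ge>no. norm ((\<Sum>i<n. a i) / b n - 0) < r"
    unfolding real_norm_def diff_0_right by blast
qed

text \<open>The \<open>r\<close>-th visit contributes \<open>1 / r\<^sup>2 \<le> 2 / r - 2 / (r + 1)\<close>, so the sum telescopes.\<close>
lemma sum_inverse_square_counts_le:
  fixes e :: "nat \<Rightarrow> bool"
  defines "N \<equiv> \<lambda>n. (\<Sum>k\<le>n. (if e k then 1 else 0)) :: nat"
  shows "(\<Sum>i<n. (if e (Suc i) then 1 / (max 1 (real (N i)))\<^sup>2 else 0))
         \<le> (if N n = 0 then 0 else 3 - 2 / real (N n))"
proof (induction n)
  case 0
  then show ?case by (auto simp: divide_le_eq)
next
  case (Suc n)
  show ?case
  proof (cases "e (Suc n)")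
    case True
    have "(\<Sum>i<Suc n. (if e (Suc i) then 1 / (max 1 (real (N i)))\<^sup>2 else 0))
        = (\<Sum>i<n. (if e (Suc i) then 1 / (max 1 (real (N i)))\<^sup>2 else 0)) + 1 / (max 1 (real (N n)))\<^sup>2"
      using True by simp
    also have "\<dots> \<le> (if N n = 0 then 0 else 3 - 2 / real (N n)) + 1 / (max 1 (real (N n)))\<^sup>2"
      using Suc.IH by simp
    also have "\<dots> \<le> 3 - 2 / (real (N n) + 1)"
    proof (cases "N n = 0")
      case False
      define x where "x = real (N n)"
      have "x \<ge> 1" using False by (simp add: x_def)
      then have "x \<noteq> 0" "x + 1 \<noteq> 0" "x * x * (x + 1) \<noteq> 0" by auto
      then have "2 / x - 2 / (x + 1) - 1 / x\<^sup>2 = (x - 1) / (x\<^sup>2 * (x + 1))"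
        unfolding power2_eq_square by (simp add: divide_simps)
      moreover have "(x - 1) / (x\<^sup>2 * (x + 1)) \<ge> 0" using \<open>x \<ge> 1\<close> by simp
      ultimately have "1 / x\<^sup>2 + 2 / (x + 1) \<le> 2 / x" by linarith
      moreover have "max 1 x = x" using \<open>x \<ge> 1\<close> by simp
      ultimately show ?thesis using False by (simp add: x_def)
    qed simp
    also have "\<dots> = (if N (Suc n) = 0 then 0 else 3 - 2 / real (N (Suc n)))"
      using True by (simp add: N_def add.commute)
    finally show ?thesis .
  next
    case False
    have "N (Suc n) = N n" using False by (simp add: N_def)
    moreover have "(\<Sum>i<Suc n. (if e (Suc i) then 1 / (max 1 (real (N i)))\<^sup>2 else 0))
        = (\<Sum>i<n. (if e (Suc i) then 1 / (max 1 (real (N i)))\<^sup>2 else 0))"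
      using False by simp
    ultimately show ?thesis using Suc.IH by (simp only:)
  qed
qed

section \<open>The choice process\<close>

lemma borel_measurable_if_eq:
  assumes "f \<in> measurable N (count_space UNIV)"
  shows "(\<lambda>\<omega>. if f \<omega> = i then (1::real) else 0) \<in> borel_measurable N"
  using measurable_compose[OF assms, of "\<lambda>z. if z = i then (1::real) else 0" borel] by simp

context
  fixes N :: "'a measure" and \<xi> :: "nat \<Rightarrow> 'a \<Rightarrow> 'm::finite" and \<zeta> :: "'m \<Rightarrow> nat \<Rightarrow> 'a \<Rightarrow> real" and n :: nat
  assumes xi: "\<And>k. k \<le> n \<Longrightarrow> \<xi> k \<in> measurable N (count_space UNIV)"
    and zeta: "\<And>k l. k \<le> n \<Longrightarrow> \<zeta> l k \<in> borel_measurable N"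
begin

lemma borel_measurable_x_proc: "(\<lambda>\<omega>. x_proc \<xi> m \<omega> $ i) \<in> borel_measurable N" if "m \<le> n"
  using that
proof (induction m arbitrary: i)
  case (Suc m)
  then show ?case using borel_measurable_if_eq[OF xi[OF Suc.prems]] by simp
qed simp

lemma borel_measurable_mu_hat: "(\<lambda>\<omega>. mu_hat \<mu> \<zeta> \<xi> n \<omega> l) \<in> borel_measurable N"
  unfolding mu_hat_def
  by (intro borel_measurable_divide borel_measurable_sum borel_measurable_times borel_measurable_add
      borel_measurable_const borel_measurable_if_eq xi zeta) auto

lemma borel_measurable_sel_prob: "(\<lambda>\<omega>. sel_prob \<alpha> \<mu> \<zeta> \<xi> \<epsilon> n \<omega> j) \<in> borel_measurable N"
proof -
  have [measurable]: "wpow \<alpha> \<in> borel_measurable borel"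
    unfolding wpow_def[abs_def] by measurable
  have [measurable]: "(\<lambda>\<omega>. mu_hat \<mu> \<zeta> \<xi> n \<omega> l) \<in> borel_measurable N"
    "(\<lambda>\<omega>. x_proc \<xi> n \<omega> $ l) \<in> borel_measurable N" for l
    by (rule borel_measurable_mu_hat, rule borel_measurable_x_proc) simp
  show ?thesis unfolding sel_prob_def Let_def by measurable
qed

end

lemma x_proc_in_unit_simplex: "x_proc \<xi> n \<omega> \<in> (unit_simplex :: (real^'m::finite) set)"
proof (induction n)
  case 0
  show ?case unfolding unit_simplex_def by simp
next
  case (Suc n)
  let ?x = "x_proc \<xi> n \<omega>"
  have "x_proc \<xi> (Suc n) \<omega> $ i = (?x $ i * real n + (if \<xi> (Suc n) \<omega> = i then 1 else 0)) / (real n + 1)"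
    for i by (simp add: field_simps)
  then have "0 \<le> x_proc \<xi> (Suc n) \<omega> $ i" for i
    using unit_simplex_nonneg[OF Suc.IH, of i] by simp
  moreover have "(\<Sum>i\<in>UNIV. x_proc \<xi> (Suc n) \<omega> $ i)
      = (\<Sum>i\<in>UNIV. ?x $ i) + (1 - (\<Sum>i\<in>UNIV. ?x $ i)) / (real n + 1)"
    by (simp add: sum.distrib sum_subtractf sum_divide_distrib[symmetric] sum_distrib_left[symmetric])
  ultimately show ?case
    using unit_simplex_sum[OF Suc.IH] by (simp add: unit_simplex_def)
qed

lemma wpow_mult_bounds:
  fixes m \<mu> x \<delta> a :: real
  assumes "0 \<le> x" "0 < \<mu>" "\<bar>m - \<mu>\<bar> \<le> \<delta> * \<mu>" "0 \<le> \<delta>" "\<delta> < 1" "0 < a"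
  shows "(1 - \<delta>) powr a * (\<mu> * x) powr a \<le> wpow a (m * x)"
    and "wpow a (m * x) \<le> (1 + \<delta>) powr a * (\<mu> * x) powr a"
proof -
  have m: "(1 - \<delta>) * \<mu> \<le> m" "m \<le> (1 + \<delta>) * \<mu>" using assms(3) by (auto simp: abs_le_iff algebra_simps)
  have "0 < (1 - \<delta>) * \<mu>" using assms by simp
  then have "0 < m" using m(1) by linarith
  have "(1 - \<delta>) powr a * (\<mu> * x) powr a \<le> wpow a (m * x) \<and>
        wpow a (m * x) \<le> (1 + \<delta>) powr a * (\<mu> * x) powr a"
  proof (cases "x = 0")
    case False
    then have "0 < x" using assms by simp
    have "(1 - \<delta>) powr a * (\<mu> * x) powr a = ((1 - \<delta>) * \<mu> * x) powr a"
      using assms by (simp add: powr_mult)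
    also have "\<dots> \<le> (m * x) powr a"
      using m(1) \<open>0 < x\<close> \<open>0 < (1 - \<delta>) * \<mu>\<close> assms(6) by (intro powr_mono2) auto
    finally have "(1 - \<delta>) powr a * (\<mu> * x) powr a \<le> (m * x) powr a" .
    moreover have "(m * x) powr a \<le> ((1 + \<delta>) * \<mu> * x) powr a"
      using m(2) \<open>0 < x\<close> \<open>0 < m\<close> assms(6) by (intro powr_mono2) auto
    moreover have "((1 + \<delta>) * \<mu> * x) powr a = (1 + \<delta>) powr a * (\<mu> * x) powr a"
      using assms by (simp add: powr_mult)
    ultimately show ?thesis using \<open>0 < x\<close> \<open>0 < m\<close> by (simp add: wpow_def)
  qed (simp add: wpow_def)
  then show "(1 - \<delta>) powr a * (\<mu> * x) powr a \<le> wpow a (m * x)"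
    and "wpow a (m * x) \<le> (1 + \<delta>) powr a * (\<mu> * x) powr a" by auto
qed

definition greedy_prob :: "real \<Rightarrow> ('m::finite \<Rightarrow> real) \<Rightarrow> ('m \<Rightarrow> nat \<Rightarrow> 'a \<Rightarrow> real)
    \<Rightarrow> (nat \<Rightarrow> 'a \<Rightarrow> 'm) \<Rightarrow> nat \<Rightarrow> 'a \<Rightarrow> 'm \<Rightarrow> real" where
  "greedy_prob \<alpha> \<mu> \<zeta> \<xi> n \<omega> j =
     (let w = (\<lambda>l. wpow \<alpha> (mu_hat \<mu> \<zeta> \<xi> n \<omega> l * x_proc \<xi> n \<omega> $ l));
          W = (\<Sum>l\<in>UNIV. w l)
      in (if W = 0 then 1 / real CARD('m) else w j / W))"

lemma sel_prob_eq_greedy_prob: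
  "sel_prob \<alpha> (\<mu> :: 'm::finite \<Rightarrow> real) \<zeta> \<xi> \<epsilon> n \<omega> j
     = (1 - \<epsilon> n) * greedy_prob \<alpha> \<mu> \<zeta> \<xi> n \<omega> j + \<epsilon> n / real CARD('m)"
  unfolding sel_prob_def greedy_prob_def Let_def by simp

lemma greedy_prob_nonneg: "0 \<le> greedy_prob \<alpha> \<mu> \<zeta> \<xi> n \<omega> j"
  unfolding greedy_prob_def Let_def wpow_def by (auto intro!: divide_nonneg_nonneg sum_nonneg)

lemma greedy_prob_le_1: "greedy_prob \<alpha> (\<mu> :: 'm::finite \<Rightarrow> real) \<zeta> \<xi> n \<omega> j \<le> 1"
proof -
  define w where "w l = wpow \<alpha> (mu_hat \<mu> \<zeta> \<xi> n \<omega> l * x_proc \<xi> n \<omega> $ l)" for l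
  have "0 \<le> w l" for l unfolding w_def wpow_def by simp
  then have "w j \<le> (\<Sum>l\<in>UNIV. w l)" "0 \<le> (\<Sum>l\<in>UNIV. w l)"
    by (auto intro: member_le_sum sum_nonneg)
  moreover have "real CARD('m) \<ge> 1" by (simp add: Suc_le_eq)
  ultimately show ?thesis
    unfolding greedy_prob_def Let_def w_def[symmetric] by (auto simp: divide_le_eq_1)
qed

lemma abs_sel_prob_le: "\<bar>sel_prob \<alpha> (\<mu> :: 'm::finite \<Rightarrow> real) \<zeta> \<xi> \<epsilon> n \<omega> j\<bar> \<le> 1 + 2 * \<bar>\<epsilon> n\<bar>"
proof -
  let ?q = "greedy_prob \<alpha> \<mu> \<zeta> \<xi> n \<omega> j"
  have "\<bar>(1 - \<epsilon> n) * ?q\<bar> \<le> \<bar>1 - \<epsilon> n\<bar>"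
    using greedy_prob_nonneg[of \<alpha> \<mu> \<zeta> \<xi> n \<omega> j] greedy_prob_le_1[of \<alpha> \<mu> \<zeta> \<xi> n \<omega> j]
    by (simp add: abs_mult mult_left_le)
  moreover have "\<bar>\<epsilon> n / real CARD('m)\<bar> \<le> \<bar>\<epsilon> n\<bar>"
    by (simp add: divide_le_eq Suc_le_eq mult_le_cancel_left1)
  ultimately show ?thesis unfolding sel_prob_eq_greedy_prob by linarith
qed

lemma sel_prob_ge_exploration:
  "0 \<le> \<epsilon> n \<Longrightarrow> \<epsilon> n \<le> 1 \<Longrightarrow> sel_prob \<alpha> (\<mu> :: 'm::finite \<Rightarrow> real) \<zeta> \<xi> \<epsilon> n \<omega> j \<ge> \<epsilon> n / real CARD('m)"
  unfolding sel_prob_eq_greedy_prob using greedy_prob_nonneg[of \<alpha> \<mu> \<zeta> \<xi> n \<omega> j] by simp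

text \<open>Of the hypotheses on the exploration rates only \<open>\<epsilon> \<longlonglongrightarrow> 0\<close>, eventual positivity and
  \<open>\<Sum>n. \<epsilon> n / (n + 1) = \<infinity>\<close> are needed, and of the i.i.d. assumption on the noise only identical
  distribution (for a uniform bound on second moments).\<close>
locale choice_process = prob_space M for M :: "'a measure" +
  fixes \<mu> :: "'m::finite \<Rightarrow> real" and \<alpha> :: real
    and \<zeta> :: "'m \<Rightarrow> nat \<Rightarrow> 'a \<Rightarrow> real" and \<xi> :: "nat \<Rightarrow> 'a \<Rightarrow> 'm"
    and \<epsilon> :: "nat \<Rightarrow> real"
  assumes mu_pos: "\<And>i. \<mu> i > 0"
    and alpha: "0 < \<alpha>" "\<alpha> < 1"
    and xi_measurable: "\<And>n. \<xi> n \<in> measurable M (count_space UNIV)"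
    and zeta_measurable: "\<And>i n. \<zeta> i n \<in> borel_measurable M"
    and zeta_mean: "\<And>i n. integrable M (\<zeta> i n) \<and> integral\<^sup>L M (\<zeta> i n) = 0"
    and zeta_square_integrable: "\<And>i n. integrable M (\<lambda>\<omega>. (\<zeta> i n \<omega>)\<^sup>2)"
    and zeta_identically_distributed: "\<And>i n. distr M borel (\<zeta> i n) = distr M borel (\<zeta> i 0)"
    and zeta_indep_past: "\<And>n. indep_set (past_and_choice M \<xi> \<zeta> n) (noise_events M \<zeta> (Suc n))"
    and eps_lim: "\<epsilon> \<longlonglongrightarrow> 0"
    and eps_eventually_pos: "eventually (\<lambda>n. 0 < \<epsilon> n) sequentially"
    and eps_not_summable: "\<not> summable (\<lambda>n. \<epsilon> n / (real n + 1))"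
    and selection: "\<And>n j A. A \<in> past_events M \<xi> \<zeta> n \<Longrightarrow>
          measure M (A \<inter> {\<omega> \<in> space M. \<xi> (Suc n) \<omega> = j})
          = (\<integral>\<omega>. indicator A \<omega> * sel_prob \<alpha> \<mu> \<zeta> \<xi> \<epsilon> n \<omega> j \<partial>M)"
begin

definition history :: "nat \<Rightarrow> nat \<Rightarrow> 'a measure" where
  "history m n = sigma (space M)
     ({\<xi> k -` A \<inter> space M | k A. k \<le> m} \<union> {\<zeta> i k -` B \<inter> space M | i k B. k \<le> n \<and> B \<in> sets borel})"

lemma space_history [simp]: "space (history m n) = space M"
  unfolding history_def by (simp add: space_measure_of_conv)

lemma sets_history:
  "sets (history m n) = sigma_sets (space M)
     ({\<xi> k -` A \<inter> space M | k A. k \<le> m} \<union> {\<zeta> i k -` B \<inter> space M | i k B. k \<le> n \<and> B \<in> sets borel})"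
  unfolding history_def by (intro sets_measure_of) blast

lemma sets_history_past: "sets (history n n) = past_events M \<xi> \<zeta> n"
  unfolding sets_history past_events_def ..

lemma sets_history_choice: "sets (history (Suc n) n) = past_and_choice M \<xi> \<zeta> n"
  unfolding sets_history past_and_choice_def ..

lemma subalgebra_history: "subalgebra M (history m n)"
proof -
  have "\<xi> k -` A \<inter> space M \<in> sets M" for k A
    using measurable_sets[OF xi_measurable[of k], of A] by simp
  moreover have "\<zeta> i k -` B \<inter> space M \<in> sets M" if "B \<in> sets borel" for i k B
    using measurable_sets[OF zeta_measurable that] by simp
  ultimately show ?thesis
    unfolding subalgebra_def sets_history by (intro conjI sets.sigma_sets_subset) auto
qed

lemma sets_history_mono: "m \<le> m' \<Longrightarrow> n \<le> n' \<Longrightarrow> sets (history m n) \<subseteq> sets (history m' n')"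
  unfolding sets_history by (intro sigma_sets_mono') (blast intro: le_trans)

lemma measurable_history_mono:
  "f \<in> borel_measurable (history m n) \<Longrightarrow> m \<le> m' \<Longrightarrow> n \<le> n' \<Longrightarrow> f \<in> borel_measurable (history m' n')"
  by (rule measurable_from_subalg[of "history m' n'" "history m n"])
     (auto simp: subalgebra_def sets_history_mono)

lemma sigma_finite_subalgebra_history: "sigma_finite_subalgebra M (history m n)"
  by (intro finite_measure_subalgebra_is_sigma_finite)
     (simp add: finite_measure_subalgebra_def finite_measure_subalgebra_axioms_def
                subalgebra_history finite_measure_axioms)

lemma measurable_history_imp_M: "f \<in> borel_measurable (history m n) \<Longrightarrow> f \<in> borel_measurable M"
  by (rule measurable_from_subalg[OF subalgebra_history])

lemma xi_history: "k \<le> m \<Longrightarrow> \<xi> k \<in> measurable (history m n) (count_space UNIV)"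
  by (rule measurableI) (auto simp: sets_history intro!: sigma_sets.Basic)

lemma zeta_history: "k \<le> n \<Longrightarrow> \<zeta> i k \<in> borel_measurable (history m n)"
  by (rule measurableI) (auto simp: sets_history intro!: sigma_sets.Basic)

abbreviation p :: "nat \<Rightarrow> 'm \<Rightarrow> 'a \<Rightarrow> real" where
  "p n j \<omega> \<equiv> sel_prob \<alpha> \<mu> \<zeta> \<xi> \<epsilon> n \<omega> j"

definition chosen :: "nat \<Rightarrow> 'm \<Rightarrow> 'a \<Rightarrow> real" where
  "chosen k j \<omega> = (if \<xi> k \<omega> = j then 1 else 0)"

lemma chosen_history: "k \<le> m \<Longrightarrow> chosen k j \<in> borel_measurable (history m n)"
  unfolding chosen_def by (rule borel_measurable_if_eq[OF xi_history])

lemma chosen_measurable [measurable]: "chosen k j \<in> borel_measurable M"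
  unfolding chosen_def by (rule borel_measurable_if_eq[OF xi_measurable])

lemma p_history: "(\<lambda>\<omega>. p n j \<omega>) \<in> borel_measurable (history n n)"
  by (rule borel_measurable_sel_prob) (auto intro: xi_history zeta_history)

lemma p_measurable [measurable]: "(\<lambda>\<omega>. p n j \<omega>) \<in> borel_measurable M"
  by (rule measurable_history_imp_M[OF p_history])

lemma abs_chosen_le_1: "\<bar>chosen k j \<omega>\<bar> \<le> 1"
  unfolding chosen_def by simp

lemma integrable_chosen: "integrable M (chosen k j)"
  by (rule integrable_const_bound[where B=1]) (auto simp: chosen_def)

lemma integrable_p: "integrable M (\<lambda>\<omega>. p n j \<omega>)"
  by (rule integrable_const_bound[where B="1 + 2 * \<bar>\<epsilon> n\<bar>"]) (auto intro: abs_sel_prob_le)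

lemma square_integrable_chosen: "integrable M (\<lambda>\<omega>. (chosen k j \<omega>)\<^sup>2)"
proof (rule integrable_const_bound[where B=1])
  show "AE x in M. norm ((chosen k j x)\<^sup>2) \<le> 1" by (simp add: chosen_def)
qed measurable

lemma square_integrable_p: "integrable M (\<lambda>\<omega>. (p n j \<omega>)\<^sup>2)"
proof (rule integrable_const_bound[where B="(1 + 2 * \<bar>\<epsilon> n\<bar>)\<^sup>2"])
  show "AE x in M. norm ((p n j x)\<^sup>2) \<le> (1 + 2 * \<bar>\<epsilon> n\<bar>)\<^sup>2"
  proof (rule AE_I2)
    fix x
    have "\<bar>p n j x\<bar>\<^sup>2 \<le> (1 + 2 * \<bar>\<epsilon> n\<bar>)\<^sup>2"
      using abs_sel_prob_le by (intro power_mono) auto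
    then show "norm ((p n j x)\<^sup>2) \<le> (1 + 2 * \<bar>\<epsilon> n\<bar>)\<^sup>2" by simp
  qed
qed measurable

lemma cond_exp_chosen: "AE \<omega> in M. real_cond_exp M (history n n) (chosen (Suc n) j) \<omega> = p n j \<omega>"
proof -
  interpret sigma_finite_subalgebra M "history n n"
    by (rule sigma_finite_subalgebra_history)
  show ?thesis
  proof (rule real_cond_exp_charact)
    fix A assume A: "A \<in> sets (history n n)"
    then have "A \<in> sets M" using subalgebra_history by (auto simp: subalgebra_def)
    have "(\<integral>x\<in>A. chosen (Suc n) j x \<partial>M)
        = (\<integral>x. indicator (A \<inter> {\<omega> \<in> space M. \<xi> (Suc n) \<omega> = j}) x \<partial>M)"
      unfolding set_lebesgue_integral_def
      by (intro Bochner_Integration.integral_cong) (auto simp: chosen_def indicator_def)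
    also have "\<dots> = measure M (A \<inter> {\<omega> \<in> space M. \<xi> (Suc n) \<omega> = j})"
      using \<open>A \<in> sets M\<close> by (simp add: Int_absorb2 Int_assoc)
    also have "\<dots> = (\<integral>x\<in>A. p n j x \<partial>M)"
      using A unfolding sets_history_past set_lebesgue_integral_def by (simp add: selection)
    finally show "(\<integral>x\<in>A. chosen (Suc n) j x \<partial>M) = (\<integral>x\<in>A. p n j x \<partial>M)" .
  qed (auto intro: integrable_chosen integrable_p p_history)
qed

lemma integral_mult_chosen_minus_p:
  assumes g: "g \<in> borel_measurable (history n n)" and g2: "integrable M (\<lambda>\<omega>. (g \<omega>)\<^sup>2)"
  shows "(\<integral>\<omega>. g \<omega> * (chosen (Suc n) j \<omega> - p n j \<omega>) \<partial>M) = 0"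
proof -
  interpret sigma_finite_subalgebra M "history n n"
    by (rule sigma_finite_subalgebra_history)
  have [measurable]: "g \<in> borel_measurable M" using g by (rule measurable_history_imp_M)
  have int_chosen: "integrable M (\<lambda>x. g x * chosen (Suc n) j x)"
    by (intro integrable_mult_of_square_integrable g2 square_integrable_chosen) measurable
  have "(\<integral>x. g x * chosen (Suc n) j x \<partial>M) = (\<integral>x. g x * real_cond_exp M (history n n) (chosen (Suc n) j) x \<partial>M)"
    using int_chosen g by (intro real_cond_exp_intg(2)[symmetric]) auto
  also have "\<dots> = (\<integral>x. g x * p n j x \<partial>M)"
    using cond_exp_chosen[of n j] by (intro integral_cong_AE) auto
  finally show ?thesis
    using int_chosen integrable_mult_of_square_integrable[OF _ _ g2 square_integrable_p]
    by (simp add: right_diff_distrib)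
qed

definition choice_noise :: "'m \<Rightarrow> nat \<Rightarrow> 'a \<Rightarrow> real" where
  "choice_noise j n \<omega> = (\<Sum>i<n. (chosen (Suc i) j \<omega> - p i j \<omega>) / (real i + 1))"

lemma AE_convergent_choice_noise: "AE \<omega> in M. convergent (\<lambda>n. choice_noise j n \<omega>)"
proof -
  obtain E where E: "\<And>n. \<bar>\<epsilon> n\<bar> \<le> E"
    using convergent_imp_Bseq[OF convergentI[OF eps_lim]] by (auto simp: Bseq_def)
  define d where "d i \<omega> = (chosen (Suc i) j \<omega> - p i j \<omega>) / (real i + 1)" for i \<omega>
  have [measurable]: "d i \<in> borel_measurable M" for i unfolding d_def by measurable
  have d_square_le: "(d i \<omega>)\<^sup>2 \<le> (2 + 2 * E)\<^sup>2 * (1 / (real i + 1))\<^sup>2" for i \<omega>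
  proof -
    have "\<bar>chosen (Suc i) j \<omega> - p i j \<omega>\<bar> \<le> 2 + 2 * E"
      using abs_chosen_le_1[of "Suc i" j \<omega>] abs_sel_prob_le[of \<alpha> \<mu> \<zeta> \<xi> \<epsilon> i \<omega> j] E[of i] by linarith
    then have "\<bar>d i \<omega>\<bar> \<le> (2 + 2 * E) * (1 / (real i + 1))"
      unfolding d_def by (simp add: divide_right_mono)
    then show ?thesis by (metis abs_ge_zero power_mono power2_abs power_mult_distrib)
  qed
  have d_square_integrable: "integrable M (\<lambda>\<omega>. (d i \<omega>)\<^sup>2)" for i
    by (rule integrable_const_bound[where B="(2 + 2 * E)\<^sup>2 * (1 / (real i + 1))\<^sup>2"])
       (use d_square_le in auto)
  interpret L2_martingale_differences M "\<lambda>n. history n n" d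
  proof
    show "d k \<in> borel_measurable (history i i)" if "k < i" for k i
      unfolding d_def using that
      by (intro borel_measurable_divide borel_measurable_diff borel_measurable_const chosen_history
          measurable_history_mono[OF p_history]) auto
    show "(\<integral>\<omega>. g \<omega> * d i \<omega> \<partial>M) = 0"
      if "g \<in> borel_measurable (history i i)" "integrable M (\<lambda>\<omega>. (g \<omega>)\<^sup>2)" for i g
      using integral_mult_chosen_minus_p[OF that, of j] by (simp add: d_def)
    show "sets (history i i) \<subseteq> sets (history k k)" if "i \<le> k" for i k
      using that by (intro sets_history_mono)
  qed (auto intro: subalgebra_history d_square_integrable)
  have "summable (\<lambda>i. (2 + 2 * E)\<^sup>2 * (1 / (real i + 1))\<^sup>2)"
    using inverse_squares_sums by (intro summable_mult) (simp add: sums_iff add.commute power_one_over)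
  moreover have "norm (\<integral>\<omega>. (d i \<omega>)\<^sup>2 \<partial>M) \<le> (2 + 2 * E)\<^sup>2 * (1 / (real i + 1))\<^sup>2" for i
  proof -
    have "(\<integral>\<omega>. (d i \<omega>)\<^sup>2 \<partial>M) \<le> (\<integral>\<omega>. (2 + 2 * E)\<^sup>2 * (1 / (real i + 1))\<^sup>2 \<partial>M)"
      by (intro integral_mono d_square_integrable d_square_le) simp
    then show ?thesis by (simp add: prob_space)
  qed
  ultimately have "summable (\<lambda>i. \<integral>\<omega>. (d i \<omega>)\<^sup>2 \<partial>M)"
    by (blast intro: summable_comparison_test')
  from AE_convergent_partial_sums[OF this] show ?thesis unfolding d_def choice_noise_def .
qed

lemma integral_history_times_next_noise:
  fixes \<phi> :: "real \<Rightarrow> real"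
  assumes f: "f \<in> borel_measurable (history (Suc n) n)" and [measurable]: "\<phi> \<in> borel_measurable borel"
    and "integrable M f" "integrable M (\<lambda>\<omega>. \<phi> (\<zeta> l (Suc n) \<omega>))"
  shows "(\<integral>\<omega>. f \<omega> * \<phi> (\<zeta> l (Suc n) \<omega>) \<partial>M) = (\<integral>\<omega>. f \<omega> \<partial>M) * (\<integral>\<omega>. \<phi> (\<zeta> l (Suc n) \<omega>) \<partial>M)"
proof -
  define X where "X \<omega> = \<phi> (\<zeta> l (Suc n) \<omega>)" for \<omega>
  have [measurable]: "f \<in> borel_measurable M" by (rule measurable_history_imp_M[OF f])
  have [measurable]: "X \<in> borel_measurable M"
    unfolding X_def using zeta_measurable by measurable
  have "sigma_sets (space M) {f -` A \<inter> space M | A. A \<in> sets borel} \<subseteq> past_and_choice M \<xi> \<zeta> n"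
    unfolding sets_history_choice[symmetric]
    using measurable_sets[OF f] sets.top[of "history (Suc n) n"] by (intro sets.sigma_sets_subset') auto
  moreover have "sigma_sets (space M) {X -` A \<inter> space M | A. A \<in> sets borel} \<subseteq> noise_events M \<zeta> (Suc n)"
    unfolding noise_events_def
  proof (intro sigma_sets_mono' subsetI, safe)
    fix A :: "real set" assume "A \<in> sets borel"
    then have "\<phi> -` A \<in> sets borel" using measurable_sets[of \<phi> borel borel] by simp
    moreover have "X -` A \<inter> space M = \<zeta> l (Suc n) -` (\<phi> -` A) \<inter> space M" unfolding X_def by auto
    ultimately show "\<exists>i B. X -` A \<inter> space M = \<zeta> i (Suc n) -` B \<inter> space M \<and> B \<in> sets borel" by blast
  qed
  ultimately have "indep_set (sigma_sets (space M) {f -` A \<inter> space M | A. A \<in> sets borel})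
      (sigma_sets (space M) {X -` A \<inter> space M | A. A \<in> sets borel})"
    using zeta_indep_past[of n] unfolding indep_sets2_eq by blast
  then have "indep_var borel f borel X"
    unfolding indep_var_eq by simp
  from indep_var_lebesgue_integral[OF this] assms(3,4) show ?thesis unfolding X_def by simp
qed

lemma integral_zeta_square: "(\<integral>\<omega>. (\<zeta> l n \<omega>)\<^sup>2 \<partial>M) = (\<integral>\<omega>. (\<zeta> l 0 \<omega>)\<^sup>2 \<partial>M)"
proof -
  have "(\<integral>\<omega>. (\<zeta> l n \<omega>)\<^sup>2 \<partial>M) = (\<integral>x. x\<^sup>2 \<partial>distr M borel (\<zeta> l n))"
    by (rule integral_distr[OF zeta_measurable, symmetric]) simp
  also have "distr M borel (\<zeta> l n) = distr M borel (\<zeta> l 0)"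
    by (rule zeta_identically_distributed)
  also have "(\<integral>x. x\<^sup>2 \<partial>distr M borel (\<zeta> l 0)) = (\<integral>\<omega>. (\<zeta> l 0 \<omega>)\<^sup>2 \<partial>M)"
    by (rule integral_distr[OF zeta_measurable]) simp
  finally show ?thesis .
qed

definition visits :: "'m \<Rightarrow> nat \<Rightarrow> 'a \<Rightarrow> nat" where
  "visits j n \<omega> = (\<Sum>k\<le>n. (if \<xi> k \<omega> = j then 1 else 0))"

lemma real_visits: "real (visits j n \<omega>) = (\<Sum>k\<le>n. chosen k j \<omega>)"
  unfolding visits_def chosen_def of_nat_sum by (intro sum.cong) auto

lemma visits_mono: "m \<le> n \<Longrightarrow> visits j m \<omega> \<le> visits j n \<omega>"
  unfolding visits_def by (rule sum_mono2) auto

lemma visits_history: "n \<le> m \<Longrightarrow> (\<lambda>\<omega>. real (visits j n \<omega>)) \<in> borel_measurable (history m k)"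
  unfolding real_visits by (intro borel_measurable_sum chosen_history) auto

definition noise_weight :: "'m \<Rightarrow> nat \<Rightarrow> 'a \<Rightarrow> real" where
  "noise_weight j i \<omega> = chosen (Suc i) j \<omega> / max 1 (real (visits j i \<omega>))"

lemma noise_weight_history: "noise_weight j i \<in> borel_measurable (history (Suc i) i)"
  unfolding noise_weight_def
  by (intro borel_measurable_divide borel_measurable_max borel_measurable_const chosen_history
      visits_history) auto

lemma noise_weight_measurable [measurable]: "noise_weight j i \<in> borel_measurable M"
  by (rule measurable_history_imp_M[OF noise_weight_history])

lemma abs_noise_weight_le_1: "\<bar>noise_weight j i \<omega>\<bar> \<le> 1"
  unfolding noise_weight_def chosen_def by (auto simp: divide_le_eq)

lemma sum_noise_weight_square_le_3: "(\<Sum>i<n. (noise_weight j i \<omega>)\<^sup>2) \<le> 3"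
proof -
  have "(\<Sum>i<n. (noise_weight j i \<omega>)\<^sup>2)
      = (\<Sum>i<n. (if \<xi> (Suc i) \<omega> = j then 1 / (max 1 (real (visits j i \<omega>)))\<^sup>2 else 0))"
    unfolding noise_weight_def chosen_def by (intro sum.cong) (simp_all add: power_divide)
  also have "\<dots> \<le> (if visits j n \<omega> = 0 then 0 else 3 - 2 / real (visits j n \<omega>))"
    using sum_inverse_square_counts_le[of "\<lambda>k. \<xi> k \<omega> = j" n] unfolding visits_def by simp
  also have "\<dots> \<le> 3" by simp
  finally show ?thesis .
qed

lemma square_integrable_noise_weight: "integrable M (\<lambda>\<omega>. (noise_weight j i \<omega>)\<^sup>2)"
  by (rule integrable_const_bound[where B=1]) (simp_all add: abs_square_le_1 abs_noise_weight_le_1)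

lemma integral_mult_weighted_noise:
  assumes g: "g \<in> borel_measurable (history (Suc i) i)" "integrable M (\<lambda>\<omega>. (g \<omega>)\<^sup>2)"
  shows "(\<integral>\<omega>. g \<omega> * (noise_weight j i \<omega> * \<zeta> j (Suc i) \<omega>) \<partial>M) = 0"
proof -
  have [measurable]: "g \<in> borel_measurable M" by (rule measurable_history_imp_M[OF g(1)])
  have "integrable M g" using square_integrable_imp_integrable[of g] g(2) by simp
  then have "integrable M (\<lambda>\<omega>. g \<omega> * noise_weight j i \<omega>)"
  proof (rule Bochner_Integration.integrable_bound)
    show "AE \<omega> in M. norm (g \<omega> * noise_weight j i \<omega>) \<le> norm (g \<omega>)"
      using abs_noise_weight_le_1 by (auto simp: abs_mult intro!: mult_left_le)
  qed measurable
  moreover have "(\<lambda>\<omega>. g \<omega> * noise_weight j i \<omega>) \<in> borel_measurable (history (Suc i) i)"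
    using g(1) noise_weight_history by (rule borel_measurable_times)
  ultimately have "(\<integral>\<omega>. g \<omega> * noise_weight j i \<omega> * \<zeta> j (Suc i) \<omega> \<partial>M)
      = (\<integral>\<omega>. g \<omega> * noise_weight j i \<omega> \<partial>M) * (\<integral>\<omega>. \<zeta> j (Suc i) \<omega> \<partial>M)"
    using zeta_mean[of j "Suc i"] by (intro integral_history_times_next_noise[where \<phi> = "\<lambda>x. x"]) simp_all
  then show ?thesis using zeta_mean by (simp add: mult.assoc)
qed

lemma summable_integral_weighted_noise_square:
  "summable (\<lambda>i. \<integral>\<omega>. (noise_weight j i \<omega> * \<zeta> j (Suc i) \<omega>)\<^sup>2 \<partial>M)"
proof (rule summableI_nonneg_bounded)
  define \<sigma> where "\<sigma> = (\<integral>\<omega>. (\<zeta> j 0 \<omega>)\<^sup>2 \<partial>M)"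
  have integral_square: "(\<integral>\<omega>. (noise_weight j i \<omega> * \<zeta> j (Suc i) \<omega>)\<^sup>2 \<partial>M)
      = (\<integral>\<omega>. (noise_weight j i \<omega>)\<^sup>2 \<partial>M) * \<sigma>" for i
    unfolding power_mult_distrib \<sigma>_def integral_zeta_square[of j "Suc i", symmetric]
    using noise_weight_history zeta_square_integrable square_integrable_noise_weight
    by (intro integral_history_times_next_noise[where \<phi> = "\<lambda>x. x\<^sup>2"]) auto
  have "(\<Sum>i<n. \<integral>\<omega>. (noise_weight j i \<omega>)\<^sup>2 \<partial>M) = (\<integral>\<omega>. (\<Sum>i<n. (noise_weight j i \<omega>)\<^sup>2) \<partial>M)" for n
    using square_integrable_noise_weight by (intro Bochner_Integration.integral_sum[symmetric]) auto
  also have "\<dots> n \<le> (\<integral>\<omega>. 3 \<partial>M)" for n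
    using square_integrable_noise_weight by (intro integral_mono sum_noise_weight_square_le_3) auto
  finally show "(\<Sum>i<n. \<integral>\<omega>. (noise_weight j i \<omega> * \<zeta> j (Suc i) \<omega>)\<^sup>2 \<partial>M) \<le> 3 * \<sigma>" for n
    unfolding integral_square sum_distrib_right[symmetric] \<sigma>_def
    by (intro mult_right_mono) (auto simp: prob_space)
qed simp

lemma AE_convergent_weighted_noise:
  "AE \<omega> in M. convergent (\<lambda>n. \<Sum>i<n. noise_weight j i \<omega> * \<zeta> j (Suc i) \<omega>)"
proof -
  define d where "d i \<omega> = noise_weight j i \<omega> * \<zeta> j (Suc i) \<omega>" for i \<omega>
  have d_square_integrable: "integrable M (\<lambda>\<omega>. (d i \<omega>)\<^sup>2)" for i
  proof (rule Bochner_Integration.integrable_bound[OF zeta_square_integrable[of j "Suc i"]])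
    show "AE \<omega> in M. norm ((d i \<omega>)\<^sup>2) \<le> norm ((\<zeta> j (Suc i) \<omega>)\<^sup>2)"
      using abs_noise_weight_le_1
      by (auto simp: d_def power_mult_distrib abs_square_le_1 intro!: mult_left_le_one_le)
  qed (use zeta_measurable in \<open>simp add: d_def\<close>)
  interpret L2_martingale_differences M "\<lambda>n. history (Suc n) n" d
  proof
    show "d k \<in> borel_measurable (history (Suc i) i)" if "k < i" for k i
      unfolding d_def using that
      by (intro borel_measurable_times zeta_history measurable_history_mono[OF noise_weight_history])
         auto
    show "sets (history (Suc i) i) \<subseteq> sets (history (Suc k) k)" if "i \<le> k" for i k
      using that by (intro sets_history_mono) auto
    show "(\<integral>\<omega>. g \<omega> * d i \<omega> \<partial>M) = 0"
      if "g \<in> borel_measurable (history (Suc i) i)" "integrable M (\<lambda>\<omega>. (g \<omega>)\<^sup>2)" for i g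
      unfolding d_def using that by (rule integral_mult_weighted_noise)
  qed (auto intro: subalgebra_history d_square_integrable)
  from AE_convergent_partial_sums summable_integral_weighted_noise_square show ?thesis
    unfolding d_def by blast
qed

lemma x_proc_Suc:
  "x_proc \<xi> (Suc n) \<omega> $ j = x_proc \<xi> n \<omega> $ j + (chosen (Suc n) j \<omega> - x_proc \<xi> n \<omega> $ j) / (real n + 1)"
  unfolding chosen_def by (simp add: add.commute)

lemma eventually_eps_unit_interval: "eventually (\<lambda>n. 0 < \<epsilon> n \<and> \<epsilon> n \<le> 1) sequentially"
  using eps_eventually_pos order_tendstoD(2)[OF eps_lim zero_less_one] by eventually_elim auto

lemma sel_prob_series_at_top:
  "filterlim (\<lambda>n. \<Sum>i<n. p i j \<omega> / (real i + 1)) at_top sequentially"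
proof -
  obtain N where N: "\<And>n. N \<le> n \<Longrightarrow> 0 < \<epsilon> n \<and> \<epsilon> n \<le> 1"
    using eventually_eps_unit_interval by (auto simp: eventually_sequentially)
  have p_ge: "\<epsilon> n / real CARD('m) \<le> p n j \<omega>" if "N \<le> n" for n
    using N[OF that] by (intro sel_prob_ge_exploration) auto
  show ?thesis
  proof (rule filterlim_partial_sums_at_top[where N = N])
    show "\<not> summable (\<lambda>i. p i j \<omega> / (real i + 1))"
    proof
      assume "summable (\<lambda>i. p i j \<omega> / (real i + 1))"
      then have "summable (\<lambda>i. real CARD('m) * (p i j \<omega> / (real i + 1)))"
        by (rule summable_mult)
      moreover have "norm (\<epsilon> n / (real n + 1)) \<le> real CARD('m) * (p n j \<omega> / (real n + 1))"
        if "N \<le> n" for n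
      proof -
        have "\<epsilon> n \<le> real CARD('m) * p n j \<omega>" using p_ge[OF that] by (simp add: field_simps)
        then have "\<epsilon> n / (real n + 1) \<le> real CARD('m) * p n j \<omega> / (real n + 1)"
          by (rule divide_right_mono) simp
        then show ?thesis using N[OF that] by simp
      qed
      ultimately have "summable (\<lambda>n. \<epsilon> n / (real n + 1))"
        by (rule summable_comparison_test')
      with eps_not_summable show False ..
    qed
    show "0 \<le> p n j \<omega> / (real n + 1)" if "N \<le> n" for n
    proof -
      have "0 \<le> \<epsilon> n / real CARD('m)" using N[OF that] by simp
      then have "0 \<le> p n j \<omega>" using p_ge[OF that] by linarith
      then show ?thesis by simp
    qed
  qed
qed

text \<open>Each arm is chosen with probability at least \<open>\<epsilon> n / m\<close> and \<open>\<Sum> \<epsilon> n / (n + 1)\<close> diverges, so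
  along a path where the choice noise converges, every arm is chosen infinitely often.\<close>
lemma visits_tendsto_at_top:
  assumes "convergent (\<lambda>n. choice_noise j n \<omega>)"
  shows "filterlim (\<lambda>n. real (visits j n \<omega>)) at_top sequentially"
proof -
  obtain B where B: "\<And>n. \<bar>choice_noise j n \<omega>\<bar> \<le> B"
    using convergent_imp_Bseq[OF assms] by (auto simp: Bseq_def)
  have lim: "filterlim (\<lambda>n. - B + (\<Sum>i<n. p i j \<omega> / (real i + 1))) at_top sequentially"
    by (rule filterlim_tendsto_add_at_top[OF tendsto_const sel_prob_series_at_top])
  have bound: "- B + (\<Sum>i<n. p i j \<omega> / (real i + 1)) \<le> real (visits j n \<omega>)" for n
  proof -
    have "(\<Sum>i<n. p i j \<omega> / (real i + 1))
        = (\<Sum>i<n. chosen (Suc i) j \<omega> / (real i + 1)) - choice_noise j n \<omega>"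
      by (simp add: choice_noise_def sum_subtractf diff_divide_distrib)
    also have "(\<Sum>i<n. chosen (Suc i) j \<omega> / (real i + 1)) \<le> (\<Sum>i<n. chosen (Suc i) j \<omega>)"
      by (intro sum_mono) (auto simp: chosen_def)
    also have "\<dots> \<le> chosen 0 j \<omega> + (\<Sum>i<n. chosen (Suc i) j \<omega>)"
      by (simp add: chosen_def)
    also have "\<dots> = real (visits j n \<omega>)"
      unfolding real_visits by (simp add: sum.atMost_shift)
    finally show ?thesis using B[of n] by linarith
  qed
  show ?thesis
    by (rule filterlim_at_top_mono[OF lim]) (intro always_eventually allI bound)
qed

lemma mu_hat_eq:
  assumes "visits j n \<omega> \<noteq> 0"
  shows "mu_hat \<mu> \<zeta> \<xi> n \<omega> j = \<mu> j + chosen 0 j \<omega> * \<zeta> j 0 \<omega> / real (visits j n \<omega>)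
    + (\<Sum>i<n. chosen (Suc i) j \<omega> * \<zeta> j (Suc i) \<omega>) / real (visits j n \<omega>)"
proof -
  have "(\<Sum>k\<le>n. (if \<xi> k \<omega> = j then 1 else 0) * (\<mu> j + \<zeta> j k \<omega>))
      = \<mu> j * real (visits j n \<omega>) + (\<Sum>k\<le>n. chosen k j \<omega> * \<zeta> j k \<omega>)"
    unfolding real_visits chosen_def by (simp add: sum.distrib sum_distrib_left algebra_simps)
  moreover have "(\<Sum>k\<le>n. chosen k j \<omega> * \<zeta> j k \<omega>)
      = chosen 0 j \<omega> * \<zeta> j 0 \<omega> + (\<Sum>i<n. chosen (Suc i) j \<omega> * \<zeta> j (Suc i) \<omega>)"
    by (rule sum.atMost_shift)
  moreover have "(\<Sum>k\<le>n. (if \<xi> k \<omega> = j then 1 else 0)) = real (visits j n \<omega>)"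
    unfolding real_visits chosen_def ..
  ultimately show ?thesis
    using assms unfolding mu_hat_def by (simp add: field_simps)
qed

text \<open>Kronecker's lemma with the weights \<open>max 1 (visits j i)\<close>, which turn the summands into the
  weighted noise of \<open>AE_convergent_weighted_noise\<close>.\<close>
lemma mu_hat_tendsto:
  assumes "convergent (\<lambda>n. choice_noise j n \<omega>)"
    and "convergent (\<lambda>n. \<Sum>i<n. noise_weight j i \<omega> * \<zeta> j (Suc i) \<omega>)"
  shows "(\<lambda>n. mu_hat \<mu> \<zeta> \<xi> n \<omega> j) \<longlonglongrightarrow> \<mu> j"
proof -
  have visits_lim: "filterlim (\<lambda>n. real (visits j n \<omega>)) at_top sequentially"
    by (rule visits_tendsto_at_top[OF assms(1)])
  define b where "b i = max 1 (real (visits j i \<omega>))" for i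
  have "mono b" unfolding mono_def b_def by (simp add: max.coboundedI2 visits_mono)
  moreover have "\<And>n. b n > 0" by (simp add: b_def)
  moreover have "filterlim b at_top sequentially"
    using visits_lim by (rule filterlim_at_top_mono) (simp add: b_def)
  moreover have "chosen (Suc i) j \<omega> * \<zeta> j (Suc i) \<omega> / b i = noise_weight j i \<omega> * \<zeta> j (Suc i) \<omega>" for i
    unfolding noise_weight_def b_def by simp
  then have "convergent (\<lambda>n. \<Sum>i<n. chosen (Suc i) j \<omega> * \<zeta> j (Suc i) \<omega> / b i)"
    using assms(2) by simp
  ultimately have noise_lim: "(\<lambda>n. (\<Sum>i<n. chosen (Suc i) j \<omega> * \<zeta> j (Suc i) \<omega>) / b n) \<longlonglongrightarrow> 0"
    by (rule kronecker_lemma)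
  have "(\<lambda>n. chosen 0 j \<omega> * \<zeta> j 0 \<omega> / real (visits j n \<omega>)) \<longlonglongrightarrow> 0"
    using visits_lim by (intro tendsto_divide_0[OF tendsto_const] filterlim_at_top_imp_at_infinity)
  then have "(\<lambda>n. \<mu> j + chosen 0 j \<omega> * \<zeta> j 0 \<omega> / real (visits j n \<omega>)
      + (\<Sum>i<n. chosen (Suc i) j \<omega> * \<zeta> j (Suc i) \<omega>) / b n) \<longlonglongrightarrow> \<mu> j + 0 + 0"
    by (intro tendsto_add tendsto_const noise_lim)
  moreover have "eventually (\<lambda>n. 1 \<le> real (visits j n \<omega>)) sequentially"
    using visits_lim unfolding filterlim_at_top by blast
  then have "eventually (\<lambda>n. \<mu> j + chosen 0 j \<omega> * \<zeta> j 0 \<omega> / real (visits j n \<omega>)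
      + (\<Sum>i<n. chosen (Suc i) j \<omega> * \<zeta> j (Suc i) \<omega>) / b n = mu_hat \<mu> \<zeta> \<xi> n \<omega> j) sequentially"
    by eventually_elim (simp add: mu_hat_eq b_def)
  ultimately show ?thesis by (simp add: Lim_transform_eventually)
qed

section \<open>Convergence to the maximiser\<close>

abbreviation xs :: "real^'m" where "xs \<equiv> psi_maximiser \<mu> \<alpha>"

lemma xs_pos: "xs $ i > 0"
  by (rule psi_maximiser_pos[OF mu_pos alpha])

text \<open>The weight of \<open>j\<close> is at least \<open>(1 - \<delta>) powr \<alpha> * (\<mu> j * x $ j) powr \<alpha>\<close> and the total weight
  at most \<open>(1 + \<delta>) powr \<alpha> * psi \<mu> \<alpha> x\<close>; by \<open>powr_mult_eq_psi_maximiser\<close> and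
  \<open>psi \<mu> \<alpha> x \<le> psi \<mu> \<alpha> xs\<close> their ratio is at least
  \<open>((1 - \<delta>) / (1 + \<delta>)) powr \<alpha> * xs $ j powr (1 - \<alpha>) * x $ j powr \<alpha>\<close>.\<close>
lemma greedy_prob_ge_gm:
  assumes "0 \<le> \<delta>" "\<delta> < 1" and close: "\<And>l. \<bar>mu_hat \<mu> \<zeta> \<xi> n \<omega> l - \<mu> l\<bar> \<le> \<delta> * \<mu> l"
  shows "(1 - \<delta>) / (1 + \<delta>) * (xs $ j powr (1 - \<alpha>) * x_proc \<xi> n \<omega> $ j powr \<alpha>)
    \<le> greedy_prob \<alpha> \<mu> \<zeta> \<xi> n \<omega> j"
proof -
  define x where "x = x_proc \<xi> n \<omega>"
  define S where "S = psi_maximiser_denom \<mu> \<alpha> powr (1 - \<alpha>)"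
  define w where "w l = wpow \<alpha> (mu_hat \<mu> \<zeta> \<xi> n \<omega> l * x $ l)" for l
  define Y where "Y l = xs $ l powr (1 - \<alpha>) * x $ l powr \<alpha>" for l
  have x: "x \<in> unit_simplex" unfolding x_def by (rule x_proc_in_unit_simplex)
  have "S > 0" using psi_maximiser_denom_pos[of \<mu> \<alpha>, OF mu_pos alpha] by (simp add: S_def)
  have Y_eq: "(\<mu> l * x $ l) powr \<alpha> = S * Y l" for l
    unfolding S_def Y_def using unit_simplex_nonneg[OF x]
    by (rule powr_mult_eq_psi_maximiser[OF mu_pos alpha])
  have w_lower: "(1 - \<delta>) powr \<alpha> * (S * Y l) \<le> w l" for l
    unfolding w_def Y_eq[symmetric] using assms mu_pos alpha unit_simplex_nonneg[OF x]
    by (intro wpow_mult_bounds(1)) auto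
  have w_upper: "w l \<le> (1 + \<delta>) powr \<alpha> * (S * Y l)" for l
    unfolding w_def Y_eq[symmetric] using assms mu_pos alpha unit_simplex_nonneg[OF x]
    by (intro wpow_mult_bounds(2)) auto
  have "(\<Sum>l\<in>UNIV. w l) \<le> (\<Sum>l\<in>UNIV. (1 + \<delta>) powr \<alpha> * (S * Y l))"
    by (intro sum_mono w_upper)
  also have "\<dots> = (1 + \<delta>) powr \<alpha> * S * (\<Sum>l\<in>UNIV. Y l)"
    by (simp add: sum_distrib_left mult.assoc)
  also have "\<dots> \<le> (1 + \<delta>) powr \<alpha> * S"
    using psi_maximiser_gm_sum_le_one[of \<mu> \<alpha>, OF mu_pos alpha x] \<open>S > 0\<close> by (intro mult_left_le) (simp_all add: Y_def)
  finally have W_le: "(\<Sum>l\<in>UNIV. w l) \<le> (1 + \<delta>) powr \<alpha> * S" .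
  obtain k where "x $ k \<noteq> 0" using unit_simplex_sum[OF x] by (metis sum.neutral zero_neq_one)
  then have "0 < Y k" using unit_simplex_nonneg[OF x, of k] xs_pos[of k] by (simp add: Y_def)
  then have "0 < w k" using w_lower[of k] \<open>S > 0\<close> assms by (smt (verit) mult_pos_pos powr_gt_zero)
  moreover have "0 \<le> w l" for l by (simp add: w_def wpow_def)
  ultimately have W_pos: "0 < (\<Sum>l\<in>UNIV. w l)"
    by (intro sum_pos2[of UNIV k]) auto
  have "(1 - \<delta>) / (1 + \<delta>) * Y j \<le> ((1 - \<delta>) / (1 + \<delta>)) powr \<alpha> * Y j"
    using assms alpha powr_mono'[of \<alpha> 1 "(1 - \<delta>) / (1 + \<delta>)"]
    by (intro mult_right_mono) (auto simp: Y_def)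
  also have "\<dots> = (1 - \<delta>) powr \<alpha> * (S * Y j) / ((1 + \<delta>) powr \<alpha> * S)"
    using \<open>S > 0\<close> assms by (simp add: powr_divide)
  also have "\<dots> \<le> w j / (\<Sum>l\<in>UNIV. w l)"
    using w_lower[of j] W_le W_pos \<open>S > 0\<close> assms
    by (intro frac_le) (auto simp: Y_def w_def wpow_def)
  also have "\<dots> = greedy_prob \<alpha> \<mu> \<zeta> \<xi> n \<omega> j"
    using W_pos unfolding greedy_prob_def Let_def w_def x_def by simp
  finally show ?thesis by (simp add: Y_def x_def)
qed

lemma x_proc_minus_choice_noise_Suc:
  "x_proc \<xi> (Suc n) \<omega> $ j - choice_noise j (Suc n) \<omega>
     = x_proc \<xi> n \<omega> $ j - choice_noise j n \<omega> + (p n j \<omega> - x_proc \<xi> n \<omega> $ j) / (real n + 1)"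
  unfolding x_proc_Suc choice_noise_def by (simp add: diff_divide_distrib)

lemma eventually_mu_hat_close:
  assumes "\<And>l. (\<lambda>n. mu_hat \<mu> \<zeta> \<xi> n \<omega> l) \<longlonglongrightarrow> \<mu> l" and "0 < \<kappa>"
  shows "eventually (\<lambda>n. \<forall>l. \<bar>mu_hat \<mu> \<zeta> \<xi> n \<omega> l - \<mu> l\<bar> \<le> \<kappa> * \<mu> l) sequentially"
proof (rule eventually_all_finite)
  fix l
  have "0 < \<kappa> * \<mu> l" using assms(2) mu_pos[of l] by simp
  then have "eventually (\<lambda>n. \<bar>mu_hat \<mu> \<zeta> \<xi> n \<omega> l - \<mu> l\<bar> < \<kappa> * \<mu> l) sequentially"
    using assms(1)[of l] by (simp add: tendsto_iff dist_real_def)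
  then show "eventually (\<lambda>n. \<bar>mu_hat \<mu> \<zeta> \<xi> n \<omega> l - \<mu> l\<bar> \<le> \<kappa> * \<mu> l) sequentially"
    by eventually_elim simp
qed

lemma sel_prob_ge_below_level:
  assumes eps: "0 \<le> \<epsilon> n" "\<epsilon> n \<le> \<kappa>" and \<kappa>: "\<kappa> < 1" and "0 < b"
    and close: "\<And>l. \<bar>mu_hat \<mu> \<zeta> \<xi> n \<omega> l - \<mu> l\<bar> \<le> \<kappa> * \<mu> l"
    and below: "x_proc \<xi> n \<omega> $ j \<le> b * xs $ j"
  shows "(1 - \<kappa>) * ((1 - \<kappa>) / (1 + \<kappa>)) * (x_proc \<xi> n \<omega> $ j / b powr (1 - \<alpha>)) \<le> p n j \<omega>"
proof -
  define X where "X = x_proc \<xi> n \<omega> $ j"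
  have "0 \<le> X" unfolding X_def by (rule unit_simplex_nonneg[OF x_proc_in_unit_simplex])
  have "X / b powr (1 - \<alpha>) \<le> xs $ j powr (1 - \<alpha>) * X powr \<alpha>"
    using below \<open>0 < b\<close> alpha xs_pos[of j] \<open>0 \<le> X\<close> by (intro div_powr_le_weighted_gm) (auto simp: X_def)
  moreover have "(1 - \<kappa>) * ((1 - \<kappa>) / (1 + \<kappa>)) \<le> (1 - \<epsilon> n) * ((1 - \<kappa>) / (1 + \<kappa>))"
    using eps \<kappa> by (intro mult_right_mono) auto
  ultimately have "(1 - \<kappa>) * ((1 - \<kappa>) / (1 + \<kappa>)) * (X / b powr (1 - \<alpha>))
      \<le> (1 - \<epsilon> n) * ((1 - \<kappa>) / (1 + \<kappa>) * (xs $ j powr (1 - \<alpha>) * X powr \<alpha>))"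
    unfolding mult.assoc[symmetric, of "1 - \<epsilon> n"] using eps \<kappa> \<open>0 \<le> X\<close> by (intro mult_mono) auto
  also have "\<dots> \<le> (1 - \<epsilon> n) * greedy_prob \<alpha> \<mu> \<zeta> \<xi> n \<omega> j"
    using eps \<kappa> close unfolding X_def by (intro mult_left_mono greedy_prob_ge_gm) auto
  also have "\<dots> \<le> p n j \<omega>"
    unfolding sel_prob_eq_greedy_prob using eps by simp
  finally show ?thesis by (simp add: X_def)
qed

text \<open>Below the level \<open>b * xs $ j\<close> the greedy part alone pushes \<open>x $ j\<close> up by a fixed fraction
  \<open>\<gamma>\<close> of itself, and exploration adds \<open>\<epsilon> n / m\<close>; together this gives a drift of order \<open>\<epsilon> n\<close>.\<close>
lemma eventually_drift:
  assumes mu_hat_lim: "\<And>l. (\<lambda>n. mu_hat \<mu> \<zeta> \<xi> n \<omega> l) \<longlonglongrightarrow> \<mu> l" and b: "0 < b" "b < 1"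
  obtains c N where "0 < c" "\<And>n. N \<le> n \<Longrightarrow> 0 < \<epsilon> n"
    "\<And>n. N \<le> n \<Longrightarrow> x_proc \<xi> n \<omega> $ j \<le> b * xs $ j \<Longrightarrow> c * \<epsilon> n \<le> p n j \<omega> - x_proc \<xi> n \<omega> $ j"
proof -
  define \<beta> where "\<beta> = b powr (1 - \<alpha>)"
  have \<beta>: "0 < \<beta>" "\<beta> < 1" unfolding \<beta>_def using b alpha powr01_less_one[of b "1 - \<alpha>"] by auto
  define \<kappa> where "\<kappa> = (1 - \<beta>) / 6"
  define \<gamma> where "\<gamma> = (1 + \<beta>) / 2 / \<beta> - 1"
  have \<gamma>: "0 < \<gamma>" unfolding \<gamma>_def using \<beta> by (simp add: field_simps)
  have \<kappa>: "0 < \<kappa>" "\<kappa> < 1" unfolding \<kappa>_def using \<beta> by auto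
  have "(1 - 3 * \<kappa>) * (1 + \<kappa>) \<le> (1 - \<kappa>) * (1 - \<kappa>)" by (simp add: algebra_simps)
  then have "(1 + \<beta>) / 2 \<le> (1 - \<kappa>) * ((1 - \<kappa>) / (1 + \<kappa>))"
    using \<kappa> by (simp add: \<kappa>_def pos_le_divide_eq field_simps)
  then have greedy_factor: "1 + \<gamma> \<le> (1 - \<kappa>) * ((1 - \<kappa>) / (1 + \<kappa>)) / \<beta>"
    unfolding \<gamma>_def using \<beta> by (simp only: diff_add_cancel add.commute[of 1]) (intro divide_right_mono; simp)
  have "eventually (\<lambda>n. \<forall>l. \<bar>mu_hat \<mu> \<zeta> \<xi> n \<omega> l - \<mu> l\<bar> \<le> \<kappa> * \<mu> l) sequentially"
    using mu_hat_lim \<kappa>(1) by (rule eventually_mu_hat_close)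
  moreover have "eventually (\<lambda>n. 0 < \<epsilon> n \<and> \<epsilon> n \<le> \<kappa>) sequentially"
    using eps_eventually_pos order_tendstoD(2)[OF eps_lim \<kappa>(1)] by eventually_elim auto
  ultimately have "eventually (\<lambda>n. (\<forall>l. \<bar>mu_hat \<mu> \<zeta> \<xi> n \<omega> l - \<mu> l\<bar> \<le> \<kappa> * \<mu> l)
      \<and> 0 < \<epsilon> n \<and> \<epsilon> n \<le> \<kappa>) sequentially"
    by (rule eventually_conj)
  then obtain N where N: "\<And>n. N \<le> n \<Longrightarrow> 0 < \<epsilon> n \<and> \<epsilon> n \<le> \<kappa> \<and>
      (\<forall>l. \<bar>mu_hat \<mu> \<zeta> \<xi> n \<omega> l - \<mu> l\<bar> \<le> \<kappa> * \<mu> l)"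
    by (auto simp: eventually_sequentially)
  show thesis
  proof (rule that[of "\<gamma> / ((1 + \<gamma>) * real CARD('m))" N])
    fix n assume "N \<le> n" and below: "x_proc \<xi> n \<omega> $ j \<le> b * xs $ j"
    define X where "X = x_proc \<xi> n \<omega> $ j"
    have eps: "0 < \<epsilon> n" "\<epsilon> n \<le> \<kappa>" using N[OF \<open>N \<le> n\<close>] by auto
    have "0 \<le> X" unfolding X_def by (rule unit_simplex_nonneg[OF x_proc_in_unit_simplex])
    then have "(1 + \<gamma>) * X \<le> (1 - \<kappa>) * ((1 - \<kappa>) / (1 + \<kappa>)) / \<beta> * X"
      using greedy_factor by (rule mult_right_mono[rotated])
    also have "\<dots> \<le> p n j \<omega>"
      using sel_prob_ge_below_level[of n \<kappa> b \<omega> j] eps \<kappa> b N[OF \<open>N \<le> n\<close>] below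
      by (simp add: X_def \<beta>_def)
    finally have "(1 + \<gamma>) * X \<le> p n j \<omega>" .
    moreover have "\<epsilon> n / real CARD('m) \<le> p n j \<omega>"
      using eps \<kappa> by (intro sel_prob_ge_exploration) auto
    ultimately have "\<gamma> * (\<epsilon> n / real CARD('m)) \<le> (1 + \<gamma>) * (p n j \<omega> - X)"
      using \<gamma> mult_left_mono[of "\<epsilon> n / real CARD('m) - X" "p n j \<omega> - X" \<gamma>]
      by (simp add: algebra_simps)
    moreover have "\<gamma> / ((1 + \<gamma>) * real CARD('m)) * \<epsilon> n = \<gamma> * (\<epsilon> n / real CARD('m)) / (1 + \<gamma>)"
      by simp
    ultimately show "\<gamma> / ((1 + \<gamma>) * real CARD('m)) * \<epsilon> n \<le> p n j \<omega> - x_proc \<xi> n \<omega> $ j"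
      using \<gamma> by (simp add: X_def pos_divide_le_eq mult.commute mult.left_commute)
  qed (use \<gamma> N in auto)
qed

lemma x_proc_Suc_ge: "x_proc \<xi> n \<omega> $ j - 1 / (real n + 1) \<le> x_proc \<xi> (Suc n) \<omega> $ j"
  using unit_simplex_le_one[OF x_proc_in_unit_simplex, of \<xi> n \<omega> j]
  unfolding x_proc_Suc by (simp add: chosen_def divide_right_mono diff_divide_distrib)

lemma x_proc_minus_choice_noise_mono:
  assumes "m \<le> n" and up: "\<And>k. m \<le> k \<Longrightarrow> k < n \<Longrightarrow> x_proc \<xi> k \<omega> $ j \<le> p k j \<omega>"
  shows "x_proc \<xi> m \<omega> $ j - choice_noise j m \<omega> \<le> x_proc \<xi> n \<omega> $ j - choice_noise j n \<omega>"
proof -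
  have "x_proc \<xi> m \<omega> $ j - choice_noise j m \<omega> \<le> x_proc \<xi> k \<omega> $ j - choice_noise j k \<omega>"
    if "m \<le> k" "k \<le> n" for k
    using that
  proof (induction k rule: dec_induct)
    case (step k)
    then have "0 \<le> (p k j \<omega> - x_proc \<xi> k \<omega> $ j) / (real k + 1)" using up[of k] by simp
    then show ?case using step x_proc_minus_choice_noise_Suc[of k \<omega> j] by linarith
  qed simp
  then show ?thesis using \<open>m \<le> n\<close> by simp
qed

text \<open>If \<open>x $ j\<close> stayed below \<open>b * xs $ j\<close>, the drift would push \<open>x $ j - choice_noise j\<close> to
  infinity along the divergent series \<open>\<Sum> \<epsilon> n / (n + 1)\<close>, although it is bounded.\<close>
lemma frequently_above:
  assumes noise: "convergent (\<lambda>n. choice_noise j n \<omega>)"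
    and mu_hat_lim: "\<And>l. (\<lambda>n. mu_hat \<mu> \<zeta> \<xi> n \<omega> l) \<longlonglongrightarrow> \<mu> l" and b: "0 < b" "b < 1"
  shows "\<exists>n\<ge>N. b * xs $ j < x_proc \<xi> n \<omega> $ j"
proof (rule ccontr)
  assume "\<not> ?thesis"
  then have below: "\<And>n. N \<le> n \<Longrightarrow> x_proc \<xi> n \<omega> $ j \<le> b * xs $ j" by (auto simp: not_less)
  obtain c N0 where c: "0 < c" and eps_pos: "\<And>n. N0 \<le> n \<Longrightarrow> 0 < \<epsilon> n"
    and drift: "\<And>n. N0 \<le> n \<Longrightarrow> x_proc \<xi> n \<omega> $ j \<le> b * xs $ j \<Longrightarrow> c * \<epsilon> n \<le> p n j \<omega> - x_proc \<xi> n \<omega> $ j"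
    using eventually_drift[OF mu_hat_lim b] by metis
  obtain B where B: "\<And>n. \<bar>choice_noise j n \<omega>\<bar> \<le> B"
    using convergent_imp_Bseq[OF noise] by (auto simp: Bseq_def)
  define N1 where "N1 = max N N0"
  define Z where "Z n = x_proc \<xi> n \<omega> $ j - choice_noise j n \<omega>" for n
  have Z_grows: "Z N1 + c * (\<Sum>i<k. \<epsilon> (i + N1) / (real (i + N1) + 1)) \<le> Z (k + N1)" for k
  proof (induction k)
    case (Suc k)
    have "c * \<epsilon> (k + N1) / (real (k + N1) + 1) \<le> (p (k + N1) j \<omega> - x_proc \<xi> (k + N1) \<omega> $ j) / (real (k + N1) + 1)"
      using drift below by (intro divide_right_mono) (auto simp: N1_def)
    then show ?case
      using Suc x_proc_minus_choice_noise_Suc[of "k + N1" \<omega> j] by (simp add: Z_def algebra_simps)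
  qed simp
  have "\<not> summable (\<lambda>i. \<epsilon> (i + N1) / (real (i + N1) + 1))"
    using eps_not_summable summable_iff_shift[of "\<lambda>n. \<epsilon> n / (real n + 1)" N1] by blast
  then have "filterlim (\<lambda>k. \<Sum>i<k. \<epsilon> (i + N1) / (real (i + N1) + 1)) at_top sequentially"
    using eps_pos by (intro filterlim_partial_sums_at_top[where N = 0]) (auto simp: N1_def less_imp_le)
  then obtain k where "(1 + B - Z N1) / c < (\<Sum>i<k. \<epsilon> (i + N1) / (real (i + N1) + 1))"
    by (auto simp: filterlim_at_top_dense eventually_sequentially)
  then have "1 + B < Z N1 + c * (\<Sum>i<k. \<epsilon> (i + N1) / (real (i + N1) + 1))"
    using c by (simp add: pos_divide_less_eq mult.commute)
  moreover have "Z (k + N1) \<le> 1 + B"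
    using unit_simplex_le_one[OF x_proc_in_unit_simplex, of \<xi> "k + N1" \<omega> j] B[of "k + N1"]
    by (simp add: Z_def abs_le_iff)
  ultimately show False using Z_grows[of k] by linarith
qed

text \<open>After the last time \<open>m\<close> at which \<open>x $ j\<close> exceeds \<open>L\<close>, the drift is nonnegative, so
  \<open>x $ j\<close> can lose at most the step \<open>1 / (m + 1)\<close> and an oscillation of \<open>choice_noise j\<close>.\<close>
lemma x_proc_ge_after_exceedance:
  assumes up: "\<And>k. N \<le> k \<Longrightarrow> x_proc \<xi> k \<omega> $ j \<le> L \<Longrightarrow> x_proc \<xi> k \<omega> $ j \<le> p k j \<omega>"
    and noise: "\<And>m n. N \<le> m \<Longrightarrow> N \<le> n \<Longrightarrow> \<bar>choice_noise j m \<omega> - choice_noise j n \<omega>\<bar> < \<eta>"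
    and step: "1 / (real N + 1) \<le> \<eta>"
    and exceed: "N \<le> t" "L < x_proc \<xi> t \<omega> $ j" "t \<le> n"
  shows "L - 2 * \<eta> \<le> x_proc \<xi> n \<omega> $ j"
proof -
  define K where "K = {k. t \<le> k \<and> k \<le> n \<and> L < x_proc \<xi> k \<omega> $ j}"
  have "finite K" unfolding K_def by (rule finite_subset[of _ "{..n}"]) auto
  define m where "m = Max K"
  have "m \<in> K" unfolding m_def using \<open>finite K\<close> exceed by (intro Max_in) (auto simp: K_def)
  then have m: "t \<le> m" "m \<le> n" "L < x_proc \<xi> m \<omega> $ j" by (auto simp: K_def)
  have "0 < \<eta>" using step by (smt (verit) divide_pos_pos of_nat_less_0_iff)
  show ?thesis
  proof (cases "m = n")
    case True
    then show ?thesis using m \<open>0 < \<eta>\<close> by simp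
  next
    case False
    have "x_proc \<xi> k \<omega> $ j \<le> p k j \<omega>" if "Suc m \<le> k" "k < n" for k
    proof (rule up)
      show "x_proc \<xi> k \<omega> $ j \<le> L"
      proof (rule ccontr)
        assume "\<not> x_proc \<xi> k \<omega> $ j \<le> L"
        then have "k \<in> K" using that m by (auto simp: K_def)
        then have "k \<le> m" unfolding m_def using \<open>finite K\<close> by simp
        then show False using that by simp
      qed
    qed (use that m exceed in auto)
    then have "x_proc \<xi> (Suc m) \<omega> $ j - choice_noise j (Suc m) \<omega> \<le> x_proc \<xi> n \<omega> $ j - choice_noise j n \<omega>"
      using False m by (intro x_proc_minus_choice_noise_mono) auto
    moreover have "\<bar>choice_noise j n \<omega> - choice_noise j (Suc m) \<omega>\<bar> < \<eta>"
      using noise m exceed False by auto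
    moreover have "1 / (real m + 1) \<le> 1 / (real N + 1)"
      using m exceed by (intro divide_left_mono) auto
    ultimately show ?thesis
      using x_proc_Suc_ge[of m \<omega> j] m(3) step by (simp add: abs_less_iff)
  qed
qed

lemma eventually_ge_psi_maximiser:
  assumes noise: "convergent (\<lambda>n. choice_noise j n \<omega>)"
    and mu_hat_lim: "\<And>l. (\<lambda>n. mu_hat \<mu> \<zeta> \<xi> n \<omega> l) \<longlonglongrightarrow> \<mu> l" and "a < 1"
  shows "eventually (\<lambda>n. a * xs $ j \<le> x_proc \<xi> n \<omega> $ j) sequentially"
proof (cases "a \<le> 0")
  case True
  have "a * xs $ j \<le> x_proc \<xi> n \<omega> $ j" for n
    using True xs_pos[of j] unit_simplex_nonneg[OF x_proc_in_unit_simplex, of \<xi> n \<omega> j]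
    by (smt (verit) mult_nonpos_nonneg)
  then show ?thesis by simp
next
  case False
  define b where "b = (1 + a) / 2"
  have b: "0 < b" "b < 1" using False \<open>a < 1\<close> by (auto simp: b_def)
  define \<eta> where "\<eta> = (b - a) * xs $ j / 2"
  have "\<eta> > 0" using \<open>a < 1\<close> xs_pos[of j] by (simp add: \<eta>_def b_def)
  obtain c N0 where c: "0 < c" and eps_pos: "\<And>n. N0 \<le> n \<Longrightarrow> 0 < \<epsilon> n"
    and drift: "\<And>n. N0 \<le> n \<Longrightarrow> x_proc \<xi> n \<omega> $ j \<le> b * xs $ j \<Longrightarrow> c * \<epsilon> n \<le> p n j \<omega> - x_proc \<xi> n \<omega> $ j"
    using eventually_drift[OF mu_hat_lim b] by metis
  obtain N2 where N2: "\<And>m n. N2 \<le> m \<Longrightarrow> N2 \<le> n \<Longrightarrow> \<bar>choice_noise j m \<omega> - choice_noise j n \<omega>\<bar> < \<eta>"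
    using noise \<open>\<eta> > 0\<close> unfolding Cauchy_convergent_iff[symmetric] Cauchy_def dist_real_def by metis
  obtain N3 :: nat where "1 / \<eta> < real N3" using reals_Archimedean2 by blast
  define N where "N = max N0 (max N2 N3)"
  have "real N3 \<le> real N + 1" by (simp add: N_def)
  then have "1 / \<eta> \<le> real N + 1" using \<open>1 / \<eta> < real N3\<close> by linarith
  then have step: "1 / (real N + 1) \<le> \<eta>" using \<open>\<eta> > 0\<close> by (simp add: field_simps)
  have up: "x_proc \<xi> k \<omega> $ j \<le> p k j \<omega>" if "N \<le> k" "x_proc \<xi> k \<omega> $ j \<le> b * xs $ j" for k
    using drift[of k] eps_pos[of k] c that by (simp add: N_def) (smt (verit) mult_pos_pos)
  obtain n1 where n1: "N \<le> n1" "b * xs $ j < x_proc \<xi> n1 \<omega> $ j"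
    using frequently_above[OF noise mu_hat_lim b] by blast
  have "b * xs $ j - 2 * \<eta> \<le> x_proc \<xi> n \<omega> $ j" if "n1 \<le> n" for n
    by (rule x_proc_ge_after_exceedance[where N = N and t = n1])
       (use up step N2 n1 that in \<open>auto simp: N_def\<close>)
  moreover have "b * xs $ j - 2 * \<eta> = a * xs $ j" by (simp add: \<eta>_def field_simps)
  ultimately have "a * xs $ j \<le> x_proc \<xi> n \<omega> $ j" if "n1 \<le> n" for n
    using that by simp
  then show ?thesis by (auto simp: eventually_sequentially)
qed

theorem AE_x_proc_tendsto: "AE \<omega> in M. (\<lambda>n. x_proc \<xi> n \<omega>) \<longlonglongrightarrow> xs"
proof -
  have "AE \<omega> in M. \<forall>j\<in>UNIV. convergent (\<lambda>n. choice_noise j n \<omega>)"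
    by (rule AE_finite_allI) (auto intro: AE_convergent_choice_noise)
  moreover have "AE \<omega> in M. \<forall>j\<in>UNIV. convergent (\<lambda>n. \<Sum>i<n. noise_weight j i \<omega> * \<zeta> j (Suc i) \<omega>)"
    by (rule AE_finite_allI) (auto intro: AE_convergent_weighted_noise)
  ultimately show ?thesis
  proof eventually_elim
    case (elim \<omega>)
    then have "\<And>l. (\<lambda>n. mu_hat \<mu> \<zeta> \<xi> n \<omega> l) \<longlonglongrightarrow> \<mu> l" by (auto intro: mu_hat_tendsto)
    then show ?case
      using elim psi_maximiser_in_unit_simplex[OF mu_pos alpha]
      by (intro tendsto_unit_simplex_if_eventually_ge x_proc_in_unit_simplex eventually_ge_psi_maximiser) auto
  qed
qed

end

theorem mainTheorem11:
  fixes M :: "'a measure"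
    and \<mu> :: "'m::finite \<Rightarrow> real"
    and \<alpha> :: real
    and \<zeta> :: "'m \<Rightarrow> nat \<Rightarrow> 'a \<Rightarrow> real"
    and \<xi> :: "nat \<Rightarrow> 'a \<Rightarrow> 'm"
    and \<epsilon> c :: "nat \<Rightarrow> real"
  assumes m_gt1: "CARD('m) > 1"
    and mu_pos: "\<And>i. \<mu> i > 0"
    and alpha: "0 < \<alpha>" "\<alpha> < 1"
    and P: "prob_space M"
    and xi_meas: "\<And>n. \<xi> n \<in> measurable M (count_space UNIV)"
    and zeta_meas: "\<And>i n. \<zeta> i n \<in> borel_measurable M"
    and zeta_mean: "\<And>i n. integrable M (\<zeta> i n) \<and> integral\<^sup>L M (\<zeta> i n) = 0"
    and zeta_var: "\<And>i n. integrable M (\<lambda>\<omega>. (\<zeta> i n \<omega>)\<^sup>2)"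
    and zeta_iid: "\<And>i. prob_space.indep_vars M (\<lambda>_. borel) (\<zeta> i) UNIV
                       \<and> (\<forall>n. distr M borel (\<zeta> i n) = distr M borel (\<zeta> i 0))"
    and zeta_indep_past: "\<And>n. prob_space.indep_set M
              (past_and_choice M \<xi> \<zeta> n) (noise_events M \<zeta> (Suc n))"
    and eps0: "0 < \<epsilon> 0" "\<epsilon> 0 \<le> 1"
    and eps_rec: "\<And>n. \<epsilon> (Suc n) = (1 - c n) * \<epsilon> n"
    and c_pos: "\<And>n. 0 < c n"
    and c_dec: "decseq c"
    and c_lim: "c \<longlonglongrightarrow> 0"
    and c_nsum: "\<not> summable c"
    and nc_lim: "(\<lambda>n. real n * c n) \<longlonglongrightarrow> 0"
    and eps_m_nsum: "\<not> summable (\<lambda>n. \<epsilon> n ^ CARD('m))"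
    and eps_n_nsum: "\<not> summable (\<lambda>n. \<epsilon> n / (real n + 1))"
    and sqrt_eps: "filterlim (\<lambda>n. sqrt (real n) * \<epsilon> n) at_top sequentially"
    and selection: "\<And>n j A. A \<in> past_events M \<xi> \<zeta> n \<Longrightarrow>
          measure M (A \<inter> {\<omega> \<in> space M. \<xi> (Suc n) \<omega> = j})
          = (\<integral>\<omega>. indicator A \<omega> * sel_prob \<alpha> \<mu> \<zeta> \<xi> \<epsilon> n \<omega> j \<partial>M)"
  shows "strict_concave_on unit_simplex (psi \<mu> \<alpha>)
         \<and> (let xs = (\<chi> i. \<mu> i powr (\<alpha> / (1 - \<alpha>)) / (\<Sum>k\<in>UNIV. \<mu> k powr (\<alpha> / (1 - \<alpha>))))
            in xs \<in> unit_simplex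
               \<and> (\<forall>y\<in>unit_simplex. y \<noteq> xs \<longrightarrow> psi \<mu> \<alpha> y < psi \<mu> \<alpha> xs)
               \<and> (AE \<omega> in M. (\<lambda>n. x_proc \<xi> n \<omega>) \<longlonglongrightarrow> xs))"
proof -
  have "\<epsilon> \<longlonglongrightarrow> 0"
  proof (rule product_recursion_tendsto_zero[where c = c])
    show "0 \<le> c n" for n using c_pos[of n] by simp
  qed (fact eps_rec c_lim c_nsum)+
  moreover have "eventually (\<lambda>n. 0 < \<epsilon> n) sequentially"
  proof -
    have "eventually (\<lambda>n. 0 < sqrt (real n) * \<epsilon> n) sequentially"
      using sqrt_eps by (simp add: filterlim_at_top_dense)
    then show ?thesis by eventually_elim (simp add: zero_less_mult_iff)
  qed
  moreover have "\<And>i n. distr M borel (\<zeta> i n) = distr M borel (\<zeta> i 0)"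
    using zeta_iid by blast
  ultimately interpret choice_process M \<mu> \<alpha> \<zeta> \<xi> \<epsilon>
    using P mu_pos alpha xi_meas zeta_meas zeta_mean zeta_var zeta_indep_past eps_n_nsum selection
    by (simp add: choice_process_def choice_process_axioms_def)
  have "(\<chi> i. \<mu> i powr (\<alpha> / (1 - \<alpha>)) / (\<Sum>k\<in>UNIV. \<mu> k powr (\<alpha> / (1 - \<alpha>)))) = xs"
    unfolding psi_maximiser_def psi_maximiser_denom_def ..
  then show ?thesis
    using psi_strict_concave[of \<mu> \<alpha>, OF mu_pos alpha] psi_maximiser_in_unit_simplex[of \<mu> \<alpha>, OF mu_pos alpha]
      psi_less_psi_maximiser[of \<mu> \<alpha>, OF mu_pos alpha] AE_x_proc_tendsto
    by (simp add: Let_def)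
qed

end
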